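(* Let $1\le y\le x$ with $x$ sufficiently large, and let $k$ be a positive integer with $k=t\cdot(\operatorname{Log}_2 x-\operatorname{Log}_2 y)$ where $t\le 10$. Then \[ \mathbb{P}\big(\omega(n_{[y,x)})=k\big)\asymp \frac{\exp\big(-(\operatorname{Log}_2 x-\operatorname{Log}_2 y)Q(t)\big)}{\sqrt{k}}, \] where $Q(t)=t\log t-t+1$ and the implied constants are absolute.
   Context: $\operatorname{Log} x\coloneqq\max\{1,\log x\}$, $\operatorname{Log}_2 x\coloneqq\operatorname{Log}(\operatorname{Log} x)$; $\omega(n)$ is the number of distinct prime factors of $n$. Random model: for each prime $p$, $n_p$ equals $1$ with probability $\frac{p}{p+1}$ and $p$ with probability $\frac1{p+1}$, independently over $p$; for $1\le y<x$, $n_{[y,x)}\coloneqq\prod_{y\le p<x}n_p$. $X\asymp Y$ means $X\ll Y\ll X$. *)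

theory Defs
  imports "HOL-Probability.Probability"
begin

definition LogM :: "real \<Rightarrow> real" where
  "LogM x = max 1 (ln x)"

definition Log2 :: "real \<Rightarrow> real" where
  "Log2 x = LogM (LogM x)"

definition omega :: "nat \<Rightarrow> nat" where
  "omega n = card (prime_factors n)"

definition primes_in :: "real \<Rightarrow> real \<Rightarrow> nat set" where
  "primes_in y x = {p. prime p \<and> y \<le> real p \<and> real p < x}"

definition np_pmf :: "nat \<Rightarrow> nat pmf" where
  "np_pmf p = map_pmf (\<lambda>b. if b then p else 1) (bernoulli_pmf (1 / (real p + 1)))"

definition np_model :: "real \<Rightarrow> real \<Rightarrow> (nat \<Rightarrow> nat) pmf" where
  "np_model y x = Pi_pmf (primes_in y x) 1 np_pmf"

definition n_interval :: "real \<Rightarrow> real \<Rightarrow> (nat \<Rightarrow> nat) \<Rightarrow> nat" where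
  "n_interval y x f = (\<Prod>p\<in>primes_in y x. f p)"

definition Q :: "real \<Rightarrow> real" where
  "Q t = t * ln t - t + 1"

end

theory Submission
  imports Defs
begin

text \<open>By independence, the probability that exactly \<open>k\<close> of the \<open>n\<^sub>p\<close> equal \<open>p\<close> is the
  product of \<open>p/(p+1)\<close> over the primes in \<open>[y, x)\<close> times the \<open>k\<close>-th elementary symmetric
  function \<open>e\<^sub>k\<close> of their reciprocals. With \<open>s\<close> the sum of these reciprocals, the product
  is \<open>exp (-s + O(1))\<close>, and \<open>k! e\<^sub>k\<close> lies between \<open>s\<^sup>k / 2\<close> and \<open>s\<^sup>k\<close> (for the lower
  bound after discarding the primes below \<open>401\<close>, which changes \<open>s\<close> by \<open>O(1)\<close>).
  Mertens' second theorem, derived from Chebyshev's bound \<open>\<theta>(n) \<le> n ln 4\<close> by summation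
  by parts, gives \<open>s = \<lambda> + O(1)\<close> for \<open>\<lambda> = Log2 x - Log2 y\<close>. Finally Stirling's formula
  turns the Poisson weight \<open>exp (-s) s\<^sup>k / k!\<close> into \<open>exp (-\<lambda> Q(k/\<lambda>)) / sqrt k\<close> up to a
  factor \<open>exp (O(|s - \<lambda>| (1 + k/\<lambda>)))\<close>, which is bounded because \<open>k \<le> 10 \<lambda>\<close>.\<close>

section \<open>Stirling-type bounds for the factorial\<close>

lemma ln_one_plus_ge_pade:
  fixes x :: real
  assumes "0 \<le> x"
  shows "2 * x / (2 + x) \<le> ln (1 + x)"
proof -
  let ?f = "\<lambda>x::real. ln (1 + x) - 2 * x / (2 + x)"
  have "?f 0 \<le> ?f x"
  proof (rule DERIV_nonneg_imp_nondecreasing[OF assms])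
    fix u :: real
    assume u: "0 \<le> u" "u \<le> x"
    have "(?f has_real_derivative 1 / (1 + u) - 4 / (2 + u)\<^sup>2) (at u)"
      using u by (auto intro!: derivative_eq_intros simp: field_simps power2_eq_square)
    moreover have "4 / (2 + u)\<^sup>2 \<le> 1 / (1 + u)"
      using u by (simp add: divide_simps power2_eq_square algebra_simps)
    ultimately show "\<exists>d. (?f has_real_derivative d) (at u) \<and> 0 \<le> d"
      by auto
  qed
  then show ?thesis by simp
qed

lemma ln_one_plus_le_cubic:
  fixes x :: real
  assumes "0 \<le> x"
  shows "ln (1 + x) \<le> x - x\<^sup>2 / 2 + x ^ 3 / 3"
proof -
  let ?f = "\<lambda>x::real. x - x\<^sup>2 / 2 + x ^ 3 / 3 - ln (1 + x)"
  have "?f 0 \<le> ?f x"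
  proof (rule DERIV_nonneg_imp_nondecreasing[OF assms])
    fix u :: real
    assume u: "0 \<le> u" "u \<le> x"
    have "(?f has_real_derivative u ^ 3 / (1 + u)) (at u)"
      using u by (auto intro!: derivative_eq_intros simp: field_simps power2_eq_square power3_eq_cube)
    then show "\<exists>d. (?f has_real_derivative d) (at u) \<and> 0 \<le> d"
      using u by auto
  qed
  then show ?thesis by simp
qed

lemma ln_one_plus_ge_quadratic:
  fixes x :: real
  assumes "0 \<le> x"
  shows "x - x\<^sup>2 / 2 \<le> ln (1 + x)"
proof -
  have "2 * x / (2 + x) - (x - x\<^sup>2 / 2) = x ^ 3 / (2 * (2 + x))"
    using assms by (simp add: field_simps power2_eq_square power3_eq_cube)
  moreover have "0 \<le> x ^ 3 / (2 * (2 + x))"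
    using assms by simp
  ultimately show ?thesis
    using ln_one_plus_ge_pade[OF assms] by linarith
qed

definition stirling_remainder :: "nat \<Rightarrow> real" where
  "stirling_remainder k = ln (fact k) - (real k + 1 / 2) * ln (real k) + real k"

lemma stirling_remainder_Suc:
  assumes "1 \<le> k"
  shows "stirling_remainder (Suc k) - stirling_remainder k = 1 - (real k + 1 / 2) * ln (1 + 1 / real k)"
proof -
  have "1 + 1 / real k = real (Suc k) / real k"
    using assms by (simp add: field_simps)
  then have L: "ln (1 + 1 / real k) = ln (real (Suc k)) - ln (real k)"
    using assms by (simp add: ln_div)
  have F: "ln (fact (Suc k) :: real) = ln (real (Suc k)) + ln (fact k)"
    by (simp add: ln_mult)
  show ?thesis
    unfolding stirling_remainder_def F L by (simp add: algebra_simps)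
qed

lemma stirling_remainder_Suc_bounds:
  assumes "1 \<le> k"
  shows "stirling_remainder (Suc k) \<le> stirling_remainder k"
    and "stirling_remainder k - 1 / (2 * real k) \<le> stirling_remainder (Suc k) - 1 / (2 * real (Suc k))"
proof -
  define x where "x = 1 / real k"
  have x: "0 < x" "x \<le> 1"
    unfolding x_def using assms by auto
  have "1 = (real k + 1 / 2) * (2 * x / (2 + x))"
    unfolding x_def using assms by (simp add: field_simps)
  also have "\<dots> \<le> (real k + 1 / 2) * ln (1 + x)"
    using ln_one_plus_ge_pade[of x] x by (intro mult_left_mono) auto
  finally show "stirling_remainder (Suc k) \<le> stirling_remainder k"
    using stirling_remainder_Suc[OF assms] unfolding x_def by simp
  have "(real k + 1 / 2) * ln (1 + x) \<le> (real k + 1 / 2) * (x - x\<^sup>2 / 2 + x ^ 3 / 3)"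
    using ln_one_plus_le_cubic[of x] x by (intro mult_left_mono) auto
  also have "\<dots> = 1 + x\<^sup>2 / 12 + x ^ 3 / 6"
    unfolding x_def using assms by (simp add: field_simps power2_eq_square power3_eq_cube)
  also have "\<dots> \<le> 1 + x\<^sup>2 / (2 * (1 + x))"
  proof -
    have "(1 / 12 + x / 6) * (1 + x) \<le> (1 / 12 + 1 / 6) * (1 + 1)"
      using x by (intro mult_mono) auto
    then have "x\<^sup>2 * ((1 / 12 + x / 6) * (1 + x)) \<le> x\<^sup>2 * (1 / 2)"
      by (intro mult_left_mono) auto
    then show ?thesis
      using x by (simp add: field_simps power2_eq_square power3_eq_cube)
  qed
  also have "x\<^sup>2 / (2 * (1 + x)) = 1 / (2 * real k) - 1 / (2 * real (Suc k))"
    unfolding x_def using assms by (simp add: field_simps power2_eq_square)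
  finally show "stirling_remainder k - 1 / (2 * real k) \<le> stirling_remainder (Suc k) - 1 / (2 * real (Suc k))"
    using stirling_remainder_Suc[OF assms] unfolding x_def by simp
qed

lemma stirling_remainder_bounds:
  assumes "1 \<le> k"
  shows "1 / 2 \<le> stirling_remainder k" "stirling_remainder k \<le> 1"
proof -
  have one: "stirling_remainder (Suc 0) = 1"
    by (simp add: stirling_remainder_def)
  have "1 / 2 \<le> stirling_remainder k - 1 / (2 * real k)"
    using assms
  proof (induction k rule: dec_induct)
    case (step n)
    then show ?case using stirling_remainder_Suc_bounds(2)[of n] by linarith
  qed (simp add: one)
  moreover have "0 \<le> 1 / (2 * real k)"
    by simp
  ultimately show "1 / 2 \<le> stirling_remainder k"
    by linarith
  show "stirling_remainder k \<le> 1"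
    using assms
  proof (induction k rule: dec_induct)
    case (step n)
    then show ?case using stirling_remainder_Suc_bounds(1)[of n] by linarith
  qed (simp add: one)
qed

lemma ln_fact_ge: "real n * ln (real n) - real n \<le> ln (fact n)"
proof (cases "n = 0")
  case False
  then have "0 \<le> ln (real n)"
    by simp
  moreover have "(real n + 1 / 2) * ln (real n) = real n * ln (real n) + ln (real n) / 2"
    by (simp add: algebra_simps)
  ultimately show ?thesis
    using stirling_remainder_bounds(1)[of n] False unfolding stirling_remainder_def by linarith
qed simp

lemma ln_fact_le: "ln (fact n) \<le> real n * ln (real n)"
proof (cases "n = 0")
  case False
  then have "ln (fact n :: real) \<le> ln (real n ^ n)"
    using fact_le_power[of n] by (subst ln_le_cancel_iff) auto
  then show ?thesis
    using False by (simp add: ln_realpow)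
qed simp

section \<open>Chebyshev's bound and Mertens' first theorem\<close>

definition primes_le :: "nat \<Rightarrow> nat set" where
  "primes_le n = {p. prime p \<and> p \<le> n}"

lemma finite_primes_le [simp]: "finite (primes_le n)"
  unfolding primes_le_def by (rule finite_subset[of _ "{..n}"]) auto

lemma primes_le_mono: "m \<le> n \<Longrightarrow> primes_le m \<subseteq> primes_le n"
  unfolding primes_le_def by auto

lemma sum_primes_le_Suc:
  "(\<Sum>p\<in>primes_le (Suc n). f p) = (\<Sum>p\<in>primes_le n. f p) + (if prime (Suc n) then f (Suc n) else 0)"
proof -
  have "primes_le (Suc n) = (if prime (Suc n) then insert (Suc n) (primes_le n) else primes_le n)"
    unfolding primes_le_def by (auto simp: le_Suc_eq)
  then show ?thesis
    by (simp add: primes_le_def add.commute)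
qed

lemma ln_eq_sum_multiplicity:
  fixes m :: nat
  assumes "0 < m" "finite P" "prime_factors m \<subseteq> P" "\<And>p. p \<in> P \<Longrightarrow> prime p"
  shows "ln (real m) = (\<Sum>p\<in>P. real (multiplicity p m) * ln (real p))"
proof -
  have "real m = (\<Prod>p\<in>prime_factors m. real p ^ multiplicity p m)"
    using prime_factorization_nat[OF assms(1)] by (simp flip: of_nat_power of_nat_prod)
  then have "ln (real m) = ln (\<Prod>p\<in>prime_factors m. real p ^ multiplicity p m)"
    by simp
  also have "\<dots> = (\<Sum>p\<in>prime_factors m. ln (real p ^ multiplicity p m))"
    by (rule ln_prod) (auto dest: in_prime_factors_imp_prime simp: prime_gt_0_nat)
  also have "\<dots> = (\<Sum>p\<in>prime_factors m. real (multiplicity p m) * ln (real p))"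
    by (intro sum.cong refl) (auto simp: ln_realpow dest!: in_prime_factors_imp_prime prime_gt_0_nat)
  also have "\<dots> = (\<Sum>p\<in>P. real (multiplicity p m) * ln (real p))"
  proof (rule sum.mono_neutral_left[OF assms(2) assms(3)])
    show "\<forall>p\<in>P - prime_factors m. real (multiplicity p m) * ln (real p) = 0"
      using assms(1,4) by (auto simp: in_prime_factors_iff not_dvd_imp_multiplicity_0)
  qed
  finally show ?thesis .
qed

lemma sum_ln_le_ln_of_prime_factors:
  fixes m :: nat
  assumes "0 < m" "P \<subseteq> prime_factors m"
  shows "(\<Sum>p\<in>P. ln (real p)) \<le> ln (real m)"
proof -
  have "(\<Sum>p\<in>P. ln (real p)) \<le> (\<Sum>p\<in>P. real (multiplicity p m) * ln (real p))"
  proof (rule sum_mono)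
    fix p
    assume "p \<in> P"
    then have "prime p" "1 \<le> multiplicity p m"
      using assms(2) by (auto simp: prime_factors_multiplicity Suc_le_eq)
    then show "ln (real p) \<le> real (multiplicity p m) * ln (real p)"
      using mult_right_mono[of 1 "real (multiplicity p m)" "ln (real p)"] prime_ge_1_nat by simp
  qed
  also have "\<dots> \<le> (\<Sum>p\<in>prime_factors m. real (multiplicity p m) * ln (real p))"
  proof (rule sum_mono2)
    fix q
    assume "q \<in> prime_factors m - P"
    then have "prime q"
      by (auto intro: in_prime_factors_imp_prime)
    then have "1 \<le> q"
      by (rule prime_ge_1_nat)
    then show "0 \<le> real (multiplicity q m) * ln (real q)"
      by simp
  qed (use assms(2) in auto)
  also have "\<dots> = ln (real m)"
    using assms(1) by (intro ln_eq_sum_multiplicity[symmetric]) auto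
  finally show ?thesis .
qed

lemma binomial_odd_middle_le: "real (Suc (2 * m) choose m) \<le> 4 ^ m"
proof -
  have "(Suc (2 * m) choose m) \<le> (\<Sum>k\<le>m. Suc (2 * m) choose k)"
    by (rule member_le_sum) auto
  also have "\<dots> = 2 ^ (2 * m)"
    using binomial_r_part_sum[of m] by simp
  finally have "real (Suc (2 * m) choose m) \<le> real (2 ^ (2 * m))"
    by (simp only: of_nat_le_iff)
  then show ?thesis
    by (simp add: power_mult)
qed

lemma prime_dvd_binomial_odd_middle:
  assumes "prime p" "Suc m < p" "p \<le> Suc (2 * m)"
  shows "p dvd (Suc (2 * m) choose m)"
proof -
  have "fact (Suc (2 * m)) = (Suc (2 * m) choose m) * (fact m * fact (Suc m))"
    using binomial_fact_lemma[of m "Suc (2 * m)"] by (simp add: algebra_simps)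
  moreover have "p dvd fact (Suc (2 * m))"
    using assms by (simp only: prime_dvd_fact_iff[OF assms(1)])
  moreover have "\<not> p dvd fact m * fact (Suc m)"
    using assms by (simp only: prime_dvd_mult_iff[OF assms(1)] prime_dvd_fact_iff[OF assms(1)]) simp
  ultimately show ?thesis
    using assms(1) by (metis prime_dvd_mult_iff)
qed

definition chebyshev_theta :: "nat \<Rightarrow> real" where
  "chebyshev_theta n = (\<Sum>p\<in>primes_le n. ln (real p))"

lemma chebyshev_theta_odd_le:
  "chebyshev_theta (Suc (2 * m)) \<le> chebyshev_theta (Suc m) + real m * ln 4"
proof -
  let ?M = "{p. prime p \<and> Suc m < p \<and> p \<le> Suc (2 * m)}"
  have split: "primes_le (Suc (2 * m)) = primes_le (Suc m) \<union> ?M"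
    unfolding primes_le_def by auto
  have "(\<Sum>p\<in>?M. ln (real p)) \<le> ln (real (Suc (2 * m) choose m))"
    by (rule sum_ln_le_ln_of_prime_factors) (auto simp: in_prime_factors_iff prime_dvd_binomial_odd_middle)
  also have "\<dots> \<le> ln (4 ^ m)"
    using binomial_odd_middle_le by (subst ln_le_cancel_iff) auto
  finally have "(\<Sum>p\<in>?M. ln (real p)) \<le> real m * ln 4"
    by (simp add: ln_realpow)
  moreover have "chebyshev_theta (Suc (2 * m)) = chebyshev_theta (Suc m) + (\<Sum>p\<in>?M. ln (real p))"
    unfolding chebyshev_theta_def split
    by (rule sum.union_disjoint) (auto simp: primes_le_def intro: finite_subset[of _ "{..Suc (2 * m)}"])
  ultimately show ?thesis
    by simp
qed

lemma chebyshev_theta_not_prime: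
  assumes "\<not> prime n"
  shows "chebyshev_theta n = chebyshev_theta (n - 1)"
proof -
  have "prime p \<and> p \<le> n \<longleftrightarrow> prime p \<and> p \<le> n - 1" for p
    using assms by (cases "p = n") auto
  then have "primes_le n = primes_le (n - 1)"
    unfolding primes_le_def by blast
  then show ?thesis
    by (simp add: chebyshev_theta_def)
qed

lemma chebyshev_theta_2: "chebyshev_theta 2 = ln 2"
proof -
  have "primes_le 2 = {2}"
    unfolding primes_le_def by (auto dest: prime_ge_2_nat)
  then show ?thesis
    by (simp add: chebyshev_theta_def)
qed

lemma chebyshev_theta_le: "chebyshev_theta n \<le> ln 4 * real n"
proof (induction n rule: less_induct)
  case (less n)
  consider "n \<le> 1" | "n = 2" | "2 < n" "even n" | m where "n = Suc (2 * m)" "0 < m"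
  proof -
    have "n \<le> 1 \<or> n = 2 \<or> (2 < n \<and> even n) \<or> (\<exists>m. n = Suc (2 * m) \<and> 0 < m)"
      by presburger
    then show ?thesis
      using that by blast
  qed
  then show ?case
  proof cases
    case 1
    then have "primes_le n = {}"
      unfolding primes_le_def by (auto dest: prime_gt_1_nat)
    then show ?thesis
      by (simp add: chebyshev_theta_def)
  next
    case 2
    have "ln (2::real) \<le> ln 4" "0 \<le> ln (4::real)"
      by simp_all
    then have "ln (2::real) \<le> ln 4 * 2"
      by linarith
    then show ?thesis
      using 2 chebyshev_theta_2 by simp
  next
    case 3
    then have "chebyshev_theta n = chebyshev_theta (n - 1)"
      using prime_odd_nat by (intro chebyshev_theta_not_prime) blast
    also have "\<dots> \<le> ln 4 * real (n - 1)"
      using less[of "n - 1"] 3 by simp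
    also have "\<dots> \<le> ln 4 * real n"
      by (intro mult_left_mono) auto
    finally show ?thesis .
  next
    case 4
    then show ?thesis
      using chebyshev_theta_odd_le[of m] less[of "Suc m"] by (simp add: algebra_simps)
  qed
qed

lemma multiplicity_eq_sum_powers_dvd:
  fixes p m :: nat
  assumes "prime p" "0 < m" "multiplicity p m \<le> N"
  shows "multiplicity p m = (\<Sum>i=1..N. if p ^ i dvd m then 1 else 0)"
proof -
  have iff: "p ^ i dvd m \<longleftrightarrow> i \<le> multiplicity p m" for i
    using assms by (intro power_dvd_iff_le_multiplicity) (auto dest: not_prime_unit)
  have "(\<Sum>i=1..N. if p ^ i dvd m then 1 else 0) = (\<Sum>i\<in>{i\<in>{1..N}. p ^ i dvd m}. 1::nat)"
    by (rule sum.inter_filter[symmetric]) simp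
  also have "{i\<in>{1..N}. p ^ i dvd m} = {1..multiplicity p m}"
    unfolding iff using assms(3) by auto
  finally show ?thesis
    by simp
qed

lemma multiplicity_le_self:
  fixes p m :: nat
  assumes "prime p" "0 < m"
  shows "multiplicity p m \<le> m"
proof -
  have "multiplicity p m < 2 ^ multiplicity p m"
    by (rule less_exp)
  also have "\<dots> \<le> p ^ multiplicity p m"
    using prime_ge_2_nat[OF assms(1)] by (rule power_mono) simp
  also have "\<dots> \<le> m"
    using assms(2) by (intro dvd_imp_le multiplicity_dvd)
  finally show ?thesis
    by simp
qed

theorem legendre_multiplicity_fact:
  fixes p n :: nat
  assumes "prime p"
  shows "multiplicity p (fact n) = (\<Sum>i=1..n. n div p ^ i)"
proof (induction n)
  case (Suc n)
  have "n < 2 ^ n"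
    by (rule less_exp)
  also have "\<dots> \<le> p ^ n"
    using prime_ge_2_nat[OF assms] by (intro power_mono) auto
  also have "\<dots> \<le> p ^ Suc n"
    using prime_gt_0_nat[OF assms] by simp
  finally have "n < p ^ Suc n" .
  then have IH: "multiplicity p (fact n :: nat) = (\<Sum>i=1..Suc n. n div p ^ i)"
    using Suc.IH by simp
  have "multiplicity p (fact (Suc n) :: nat) = multiplicity p (Suc n * fact n)"
    by (simp add: fact_Suc)
  also have "\<dots> = multiplicity p (Suc n) + multiplicity p (fact n :: nat)"
    using assms by (intro prime_elem_multiplicity_mult_distrib) auto
  also have "multiplicity p (Suc n) = (\<Sum>i=1..Suc n. if p ^ i dvd Suc n then 1 else 0)"
    using multiplicity_le_self[OF assms, of "Suc n"] by (intro multiplicity_eq_sum_powers_dvd assms) auto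
  also have "\<dots> + multiplicity p (fact n :: nat) = (\<Sum>i=1..Suc n. Suc n div p ^ i)"
    unfolding IH
  proof (subst sum.distrib[symmetric], rule sum.cong[OF refl])
    fix i
    have "0 < p ^ i"
      using prime_gt_0_nat[OF assms] by simp
    then show "(if p ^ i dvd Suc n then 1 else 0) + n div p ^ i = Suc n div p ^ i"
      by (auto simp: div_Suc dvd_eq_mod_eq_0)
  qed
  finally show ?case .
qed simp

lemma sum_power_le_geometric:
  fixes x :: real
  assumes "0 \<le> x" "x < 1"
  shows "(\<Sum>i=1..N. x ^ i) \<le> x / (1 - x)"
proof -
  have "(\<Sum>i=1..N. x ^ i) = x * (1 - x ^ N) / (1 - x)"
  proof (induction N)
    case (Suc N)
    have "(\<Sum>i=1..Suc N. x ^ i) = x * (1 - x ^ N) / (1 - x) + x ^ Suc N"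
      using Suc by simp
    also have "\<dots> = x * (1 - x ^ Suc N) / (1 - x)"
      using assms by (simp add: field_simps)
    finally show ?case .
  qed simp
  also have "\<dots> \<le> x / (1 - x)"
    using assms by (intro divide_right_mono) (auto simp: mult_left_le power_le_one)
  finally show ?thesis .
qed

lemma multiplicity_fact_le:
  fixes p n :: nat
  assumes "prime p"
  shows "real (multiplicity p (fact n)) \<le> real n / (real p - 1)"
proof -
  have p: "2 \<le> real p"
    using prime_ge_2_nat[OF assms] by simp
  have "real (multiplicity p (fact n)) = (\<Sum>i=1..n. real (n div p ^ i))"
    by (simp add: legendre_multiplicity_fact[OF assms])
  also have "\<dots> \<le> (\<Sum>i=1..n. real n * (1 / real p) ^ i)"
  proof (rule sum_mono)
    fix i
    have "real (n div p ^ i) \<le> real n / real (p ^ i)"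
      by (rule of_nat_div_le_of_nat)
    then show "real (n div p ^ i) \<le> real n * (1 / real p) ^ i"
      by (simp add: power_divide)
  qed
  also have "\<dots> = real n * (\<Sum>i=1..n. (1 / real p) ^ i)"
    by (simp add: sum_distrib_left)
  also have "\<dots> \<le> real n * ((1 / real p) / (1 - 1 / real p))"
    using p by (intro mult_left_mono sum_power_le_geometric) auto
  also have "\<dots> = real n / (real p - 1)"
    using p by (simp add: field_simps)
  finally show ?thesis .
qed

lemma div_le_multiplicity_fact:
  fixes p n :: nat
  assumes "prime p" "1 \<le> n"
  shows "n div p \<le> multiplicity p (fact n)"
proof -
  have "n div p ^ 1 \<le> (\<Sum>i=1..n. n div p ^ i)"
    by (rule member_le_sum) (use assms in auto)
  then show ?thesis
    using legendre_multiplicity_fact[OF assms(1), of n] by simp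
qed

lemma ln_fact_eq_sum_primes_le:
  "ln (fact n) = (\<Sum>p\<in>primes_le n. real (multiplicity p (fact n :: nat)) * ln (real p))"
proof -
  have "ln (fact n :: real) = ln (real (fact n :: nat))"
    by (simp add: of_nat_fact)
  also have "\<dots> = (\<Sum>p\<in>primes_le n. real (multiplicity p (fact n :: nat)) * ln (real p))"
    by (rule ln_eq_sum_multiplicity) (auto simp: primes_le_def in_prime_factors_iff prime_dvd_fact_iff)
  finally show ?thesis .
qed

lemma sum_ln_div_sq_le:
  assumes "1 \<le> n"
  shows "(\<Sum>m=2..n. ln (real m) / (real m * (real m - 1))) \<le> 2 - (2 + ln (real n)) / real n"
  using assms
proof (induction n rule: dec_induct)
  case (step n)
  have n: "1 \<le> real n"
    using step by simp
  have "1 + 1 / real n = real (Suc n) / real n"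
    using n by (simp add: field_simps)
  then have "ln (real (Suc n)) - ln (real n) = ln (1 + 1 / real n)"
    using n by (simp add: ln_div)
  also have "\<dots> \<le> 1 / real n"
    by (rule ln_add_one_self_le_self) simp
  finally have "(real n + 1) * (ln (real (Suc n)) - ln (real n)) \<le> (real n + 1) * (1 / real n)"
    by (intro mult_left_mono) auto
  also have "\<dots> \<le> 2"
    using n by (simp add: field_simps)
  finally have "ln (real (Suc n)) + real n * (2 + ln (real (Suc n))) \<le> real (Suc n) * (2 + ln (real n))"
    by (simp add: algebra_simps)
  then have "(ln (real (Suc n)) + real n * (2 + ln (real (Suc n)))) / (real (Suc n) * real n)
      \<le> (real (Suc n) * (2 + ln (real n))) / (real (Suc n) * real n)"
    by (intro divide_right_mono) auto
  moreover have "(ln (real (Suc n)) + real n * (2 + ln (real (Suc n)))) / (real (Suc n) * real n)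
      = ln (real (Suc n)) / (real (Suc n) * real n) + (2 + ln (real (Suc n))) / real (Suc n)"
    using n by (simp add: add_divide_distrib)
  ultimately have "ln (real (Suc n)) / (real (Suc n) * real n) + (2 + ln (real (Suc n))) / real (Suc n)
      \<le> (2 + ln (real n)) / real n"
    using n by simp
  then show ?case
    using step by (simp add: sum.cl_ivl_Suc)
qed simp

lemma sum_primes_ln_div_sq_le:
  "(\<Sum>p\<in>primes_le n. ln (real p) / (real p * (real p - 1))) \<le> 2"
proof (cases "n = 0")
  case True
  then have "primes_le n = {}"
    unfolding primes_le_def by (auto dest: prime_gt_0_nat)
  then show ?thesis
    by simp
next
  case False
  have "(\<Sum>p\<in>primes_le n. ln (real p) / (real p * (real p - 1)))
      \<le> (\<Sum>m=2..n. ln (real m) / (real m * (real m - 1)))"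
    by (rule sum_mono2) (auto simp: primes_le_def dest: prime_ge_2_nat)
  also have "\<dots> \<le> 2 - (2 + ln (real n)) / real n"
    using False by (intro sum_ln_div_sq_le) simp
  also have "\<dots> \<le> 2"
    using False by simp
  finally show ?thesis .
qed

definition mertens_sum :: "nat \<Rightarrow> real" where
  "mertens_sum n = (\<Sum>p\<in>primes_le n. ln (real p) / real p)"

lemma mertens_sum_ge:
  assumes "1 \<le> n"
  shows "ln (real n) - 3 \<le> mertens_sum n"
proof -
  let ?P = "primes_le n"
  have "real n * ln (real n) - real n \<le> (\<Sum>p\<in>?P. real (multiplicity p (fact n :: nat)) * ln (real p))"
    using ln_fact_ge[of n] by (simp add: ln_fact_eq_sum_primes_le)
  also have "\<dots> \<le> (\<Sum>p\<in>?P. real n / (real p - 1) * ln (real p))"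
    by (intro sum_mono mult_right_mono multiplicity_fact_le) (auto simp: primes_le_def dest: prime_ge_1_nat)
  also have "\<dots> = (\<Sum>p\<in>?P. real n * (ln (real p) / real p) + real n * (ln (real p) / (real p * (real p - 1))))"
    by (intro sum.cong) (auto simp: primes_le_def field_simps dest!: prime_ge_2_nat)
  also have "\<dots> = real n * mertens_sum n + real n * (\<Sum>p\<in>?P. ln (real p) / (real p * (real p - 1)))"
    by (simp add: sum.distrib sum_distrib_left mertens_sum_def)
  also have "\<dots> \<le> real n * mertens_sum n + real n * 2"
    by (intro add_left_mono mult_left_mono sum_primes_ln_div_sq_le) auto
  finally have "real n * (ln (real n) - 3) \<le> real n * mertens_sum n"
    by (simp add: algebra_simps)
  then show ?thesis
    using assms by simp
qed

lemma mertens_sum_le: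
  assumes "1 \<le> n"
  shows "mertens_sum n \<le> ln (real n) + ln 4"
proof -
  let ?P = "primes_le n"
  have "real n * mertens_sum n - chebyshev_theta n = (\<Sum>p\<in>?P. (real n / real p - 1) * ln (real p))"
    by (simp add: mertens_sum_def chebyshev_theta_def sum_distrib_left algebra_simps flip: sum_subtractf)
  also have "\<dots> \<le> (\<Sum>p\<in>?P. real (multiplicity p (fact n :: nat)) * ln (real p))"
  proof (intro sum_mono mult_right_mono)
    fix p
    assume "p \<in> ?P"
    then have p: "prime p"
      by (simp add: primes_le_def)
    have "real n = real p * real (n div p) + real (n mod p)"
      by (metis div_mult_mod_eq of_nat_add of_nat_mult mult.commute)
    moreover have "real (n mod p) < real p"
      using prime_gt_0_nat[OF p] by simp
    ultimately have "real n / real p - 1 \<le> real (n div p)"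
      using prime_gt_0_nat[OF p] by (simp add: field_simps)
    also have "\<dots> \<le> real (multiplicity p (fact n :: nat))"
      using div_le_multiplicity_fact[OF p assms] by simp
    finally show "real n / real p - 1 \<le> real (multiplicity p (fact n :: nat))" .
    show "0 \<le> ln (real p)"
      using prime_ge_1_nat[OF p] by simp
  qed
  also have "\<dots> \<le> real n * ln (real n)"
    using ln_fact_le[of n] by (simp add: ln_fact_eq_sum_primes_le)
  finally have "real n * mertens_sum n \<le> real n * ln (real n) + ln 4 * real n"
    using chebyshev_theta_le[of n] by simp
  then have "real n * mertens_sum n \<le> real n * (ln (real n) + ln 4)"
    by (simp add: algebra_simps)
  then show ?thesis
    using assms by simp
qed

theorem mertens_first:
  assumes "1 \<le> n"
  shows "\<bar>mertens_sum n - ln (real n)\<bar> \<le> 3"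
proof -
  have "ln (4::real) \<le> 3"
    using ln_le_minus_one[of 4] by simp
  then show ?thesis
    using mertens_sum_ge[OF assms] mertens_sum_le[OF assms] by linarith
qed

section \<open>Mertens' second theorem\<close>

definition recip_sum_primes_le :: "nat \<Rightarrow> real" where
  "recip_sum_primes_le n = (\<Sum>p\<in>primes_le n. 1 / real p)"

text \<open>Summation by parts: with \<open>A = mertens_sum\<close>, the sum of \<open>1/p\<close> over \<open>p \<le> n\<close> is
  \<open>A(n)/ln n\<close> plus the sum of \<open>A(m) (1/ln m - 1/ln (m+1))\<close> over \<open>m < n\<close>. Since
  \<open>A(m) = ln m + O(1)\<close>, the increments of the following quantity are bounded by the
  telescoping terms \<open>4 (1/ln m - 1/ln (m+1))\<close>.\<close>
definition abel_remainder :: "nat \<Rightarrow> real" where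
  "abel_remainder n = recip_sum_primes_le n - mertens_sum n / ln (real n) - ln (ln (real n))"

lemma ln_ln_Suc_bounds:
  fixes b :: nat
  assumes "2 \<le> b"
  defines "L0 \<equiv> ln (real b)" and "L1 \<equiv> ln (real (Suc b))"
  shows "1 - L0 / L1 \<le> ln L1 - ln L0"
    and "ln L1 - ln L0 \<le> 1 - L0 / L1 + (1 / L0 - 1 / L1)"
proof -
  have L0: "0 < L0" and L01: "L0 < L1"
    unfolding L0_def L1_def using assms by simp_all
  have "ln (L0 / L1) \<le> L0 / L1 - 1"
    using L0 L01 by (intro ln_le_minus_one) simp
  then show "1 - L0 / L1 \<le> ln L1 - ln L0"
    using L0 L01 by (simp add: ln_div)
  have "L1 - L0 = ln (1 + 1 / real b)"
  proof -
    have "1 + 1 / real b = real (Suc b) / real b"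
      using assms by (simp add: field_simps)
    then show ?thesis
      unfolding L0_def L1_def using assms by (simp add: ln_div)
  qed
  also have "\<dots> \<le> 1 / real b"
    by (rule ln_add_one_self_le_self) simp
  also have "\<dots> \<le> 1"
    using assms by simp
  finally have "(L1 - L0) * (1 / L0 - 1 / L1) \<le> 1 * (1 / L0 - 1 / L1)"
    using L0 L01 by (intro mult_right_mono) (simp_all add: frac_le)
  moreover have "ln (L1 / L0) \<le> L1 / L0 - 1"
    using L0 L01 by (intro ln_le_minus_one) simp
  moreover have "L1 / L0 - 1 = 1 - L0 / L1 + (L1 - L0) * (1 / L0 - 1 / L1)"
    using L0 L01 by (simp add: field_simps)
  ultimately show "ln L1 - ln L0 \<le> 1 - L0 / L1 + (1 / L0 - 1 / L1)"
    using L0 L01 by (simp add: ln_div)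
qed

lemma abel_remainder_Suc:
  fixes b :: nat
  assumes "2 \<le> b"
  shows "\<bar>abel_remainder (Suc b) - abel_remainder b\<bar> \<le> 4 * (1 / ln (real b) - 1 / ln (real (Suc b)))"
proof -
  define L0 where "L0 = ln (real b)"
  define L1 where "L1 = ln (real (Suc b))"
  define d where "d = 1 / L0 - 1 / L1"
  have L0: "0 < L0" and L01: "L0 < L1"
    unfolding L0_def L1_def using assms by simp_all
  have d: "0 \<le> d"
    unfolding d_def using L0 L01 by (simp add: frac_le)
  have step: "recip_sum_primes_le (Suc b) - recip_sum_primes_le b = (mertens_sum (Suc b) - mertens_sum b) / L1"
  proof -
    have "recip_sum_primes_le (Suc b) - recip_sum_primes_le b = (if prime (Suc b) then 1 / real (Suc b) else 0)"
      unfolding recip_sum_primes_le_def by (subst sum_primes_le_Suc) simp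
    moreover have "mertens_sum (Suc b) - mertens_sum b = (if prime (Suc b) then L1 / real (Suc b) else 0)"
      unfolding mertens_sum_def L1_def by (subst sum_primes_le_Suc) simp
    ultimately show ?thesis
      using L0 L01 by simp
  qed
  have "(recip_sum_primes_le (Suc b) - mertens_sum (Suc b) / L1) - (recip_sum_primes_le b - mertens_sum b / L0)
      = (mertens_sum (Suc b) - mertens_sum b) / L1 - mertens_sum (Suc b) / L1 + mertens_sum b / L0"
    using step by simp
  also have "\<dots> = mertens_sum b * d"
    unfolding d_def using L0 L01 by (simp add: field_simps)
  finally have "abel_remainder (Suc b) - abel_remainder b = mertens_sum b * d - (ln L1 - ln L0)"
    unfolding abel_remainder_def L0_def[symmetric] L1_def[symmetric] by simp
  moreover have "\<bar>mertens_sum b - L0\<bar> \<le> 3"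
    unfolding L0_def using mertens_first[of b] assms by simp
  then have "(L0 - 3) * d \<le> mertens_sum b * d" "mertens_sum b * d \<le> (L0 + 3) * d"
    using d by (intro mult_right_mono; simp)+
  moreover have "L0 * d = 1 - L0 / L1"
    unfolding d_def using L0 L01 by (simp add: field_simps)
  moreover have "1 - L0 / L1 \<le> ln L1 - ln L0" "ln L1 - ln L0 \<le> 1 - L0 / L1 + d"
    using ln_ln_Suc_bounds[OF assms] unfolding L0_def L1_def d_def by simp_all
  ultimately have "\<bar>abel_remainder (Suc b) - abel_remainder b\<bar> \<le> 4 * d"
    using d by (simp add: algebra_simps abs_le_iff)
  then show ?thesis
    unfolding d_def L0_def L1_def .
qed

lemma abel_remainder_diff:
  fixes a b :: nat
  assumes "2 \<le> a" "a \<le> b"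
  shows "\<bar>abel_remainder b - abel_remainder a\<bar> \<le> 4 * (1 / ln (real a) - 1 / ln (real b))"
  using assms(2)
proof (induction b rule: dec_induct)
  case (step n)
  have "\<bar>abel_remainder (Suc n) - abel_remainder a\<bar>
      \<le> \<bar>abel_remainder (Suc n) - abel_remainder n\<bar> + \<bar>abel_remainder n - abel_remainder a\<bar>"
    by simp
  also have "\<dots> \<le> 4 * (1 / ln (real n) - 1 / ln (real (Suc n))) + 4 * (1 / ln (real a) - 1 / ln (real n))"
    using abel_remainder_Suc[of n] step assms by (intro add_mono) auto
  finally show ?case
    by (simp add: algebra_simps)
qed simp

lemma mertens_sum_div_ln:
  assumes "2 \<le> n"
  shows "\<bar>mertens_sum n / ln (real n) - 1\<bar> \<le> 3 / ln (real n)"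
proof -
  have L: "0 < ln (real n)"
    using assms by simp
  have "\<bar>mertens_sum n - ln (real n)\<bar> / ln (real n) \<le> 3 / ln (real n)"
    using mertens_first[of n] assms L by (intro divide_right_mono) auto
  moreover have "mertens_sum n / ln (real n) - 1 = (mertens_sum n - ln (real n)) / ln (real n)"
    using L by (simp add: field_simps)
  ultimately show ?thesis
    using L by simp
qed

lemma mertens_second_nat:
  fixes a b :: nat
  assumes "2 \<le> a" "a \<le> b"
  shows "\<bar>recip_sum_primes_le b - recip_sum_primes_le a - (ln (ln (real b)) - ln (ln (real a)))\<bar>
    \<le> 10 / ln (real a)"
proof -
  have La: "0 < ln (real a)" and Lab: "ln (real a) \<le> ln (real b)"
    using assms by simp_all
  have "\<bar>abel_remainder b - abel_remainder a\<bar> \<le> 4 / ln (real a) - 4 / ln (real b)"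
    using abel_remainder_diff[OF assms] by simp
  moreover have "0 \<le> 4 / ln (real b)"
    using La Lab by simp
  ultimately have "\<bar>abel_remainder b - abel_remainder a\<bar> \<le> 4 / ln (real a)"
    by linarith
  moreover have "\<bar>mertens_sum b / ln (real b) - 1\<bar> \<le> 3 / ln (real a)"
    using mertens_sum_div_ln[of b] assms La Lab divide_left_mono[of "ln (real a)" "ln (real b)" 3]
    by simp
  moreover have "\<bar>mertens_sum a / ln (real a) - 1\<bar> \<le> 3 / ln (real a)"
    using mertens_sum_div_ln[of a] assms by simp
  moreover have "recip_sum_primes_le b - recip_sum_primes_le a - (ln (ln (real b)) - ln (ln (real a)))
      = (abel_remainder b - abel_remainder a) + (mertens_sum b / ln (real b) - 1)
        - (mertens_sum a / ln (real a) - 1)"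
    unfolding abel_remainder_def by simp
  ultimately show ?thesis
    by (simp add: abs_le_iff)
qed

definition recip_sum_primes_in :: "real \<Rightarrow> real \<Rightarrow> real" where
  "recip_sum_primes_in y x = (\<Sum>p\<in>primes_in y x. 1 / real p)"

lemma finite_primes_in [simp]: "finite (primes_in y x)"
proof -
  have "primes_in y x \<subseteq> {..nat \<lceil>x\<rceil>}"
  proof
    fix p
    assume "p \<in> primes_in y x"
    then have "int p < \<lceil>x\<rceil>"
      unfolding primes_in_def by (simp add: less_ceiling_iff)
    then show "p \<in> {..nat \<lceil>x\<rceil>}"
      by simp
  qed
  then show ?thesis
    by (rule finite_subset) simp
qed

lemma prime_of_primes_in: "p \<in> primes_in y x \<Longrightarrow> prime p"
  unfolding primes_in_def by simp

lemma nat_ceiling_minus_one: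
  fixes y :: real
  assumes "1 \<le> y"
  defines "a \<equiv> nat (\<lceil>y\<rceil> - 1)"
  shows "real a < y" "y \<le> real a + 1" "y \<le> real p \<longleftrightarrow> a < p" "real p < y \<longleftrightarrow> p \<le> a"
proof -
  have ai: "int a = \<lceil>y\<rceil> - 1"
    unfolding a_def using assms by simp
  have "real a = real_of_int (int a)"
    by simp
  then have "real a = real_of_int \<lceil>y\<rceil> - 1"
    using ai by simp
  then show "real a < y" "y \<le> real a + 1"
    using ceiling_correct[of y] by linarith+
  have "y \<le> real p \<longleftrightarrow> \<lceil>y\<rceil> \<le> int p"
    by (simp add: ceiling_le_iff)
  also have "\<dots> \<longleftrightarrow> int a < int p"
    using ai by linarith
  finally show "y \<le> real p \<longleftrightarrow> a < p"
    by simp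
  have "real p < y \<longleftrightarrow> int p < \<lceil>y\<rceil>"
    by (simp add: less_ceiling_iff)
  also have "\<dots> \<longleftrightarrow> int p \<le> int a"
    using ai by linarith
  finally show "real p < y \<longleftrightarrow> p \<le> a"
    by simp
qed

lemma recip_sum_primes_in_eq_diff:
  fixes y x :: real
  assumes "1 \<le> y" "y \<le> x"
  defines "a \<equiv> nat (\<lceil>y\<rceil> - 1)" and "b \<equiv> nat (\<lceil>x\<rceil> - 1)"
  shows "recip_sum_primes_in y x = recip_sum_primes_le b - recip_sum_primes_le a"
    and "real a < y" "y \<le> real a + 1" "real b < x" "x \<le> real b + 1" "a \<le> b"
proof -
  note a = nat_ceiling_minus_one[OF assms(1), folded a_def]
  note b = nat_ceiling_minus_one[of x, folded b_def, OF order_trans[OF assms(1,2)]]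
  show "real a < y" "y \<le> real a + 1" "real b < x" "x \<le> real b + 1"
    using a b by simp_all
  show ab: "a \<le> b"
    using a(1) b(2) assms(2) by linarith
  have "primes_in y x = primes_le b - primes_le a"
    unfolding primes_in_def primes_le_def using a(3) b(4) by auto
  then show "recip_sum_primes_in y x = recip_sum_primes_le b - recip_sum_primes_le a"
    unfolding recip_sum_primes_in_def recip_sum_primes_le_def
    by (rule ssubst) (rule sum_diff, use primes_le_mono[OF ab] in auto)
qed

lemma ln_ln_diff_le:
  fixes b :: nat and x :: real
  assumes "2 \<le> b" "real b \<le> x" "x \<le> real b + 1"
  shows "0 \<le> ln (ln x) - ln (ln (real b))" "ln (ln x) - ln (ln (real b)) \<le> 1 / ln (real b)"
proof -
  have Lb: "0 < ln (real b)" and Lbx: "ln (real b) \<le> ln x"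
    using assms by simp_all
  show "0 \<le> ln (ln x) - ln (ln (real b))"
    using Lb Lbx by simp
  have "ln x - ln (real b) = ln (x / real b)"
    using assms by (simp add: ln_div)
  also have "\<dots> \<le> x / real b - 1"
    using assms by (intro ln_le_minus_one) simp
  also have "\<dots> \<le> 1"
    using assms by (simp add: field_simps)
  finally have diff: "ln x - ln (real b) \<le> 1" .
  have "ln (ln x) - ln (ln (real b)) = ln (ln x / ln (real b))"
    using Lb Lbx by (simp add: ln_div)
  also have "\<dots> \<le> ln x / ln (real b) - 1"
    using Lb Lbx by (intro ln_le_minus_one) simp
  also have "\<dots> = (ln x - ln (real b)) / ln (real b)"
    using Lb by (simp add: field_simps)
  also have "\<dots> \<le> 1 / ln (real b)"
    using diff Lb by (intro divide_right_mono) simp_all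
  finally show "ln (ln x) - ln (ln (real b)) \<le> 1 / ln (real b)" .
qed

theorem mertens_second:
  fixes x y :: real
  assumes "3 \<le> y" "y \<le> x"
  shows "\<bar>recip_sum_primes_in y x - (ln (ln x) - ln (ln y))\<bar> \<le> 24 / ln y"
proof -
  define a where "a = nat (\<lceil>y\<rceil> - 1)"
  define b where "b = nat (\<lceil>x\<rceil> - 1)"
  note ab = recip_sum_primes_in_eq_diff[of y x, folded a_def b_def, OF _ assms(2)]
  have "1 \<le> y"
    using assms by simp
  note ab = ab[OF this]
  have a: "2 \<le> a" and "a \<le> b"
    using ab assms by simp_all
  then have La: "0 < ln (real a)" and Lab: "1 / ln (real b) \<le> 1 / ln (real a)"
    by (simp_all add: frac_le)
  have "0 \<le> ln (ln x) - ln (ln (real b))" "ln (ln x) - ln (ln (real b)) \<le> 1 / ln (real b)"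
    using ln_ln_diff_le[of b x] ab a \<open>a \<le> b\<close> by auto
  moreover have "0 \<le> ln (ln y) - ln (ln (real a))" "ln (ln y) - ln (ln (real a)) \<le> 1 / ln (real a)"
    using ln_ln_diff_le[OF a, of y] ab by auto
  ultimately have "\<bar>recip_sum_primes_in y x - (ln (ln x) - ln (ln y))\<bar> \<le> 12 / ln (real a)"
    using mertens_second_nat[OF a \<open>a \<le> b\<close>] ab(1) Lab by (simp add: abs_le_iff)
  also have "\<dots> \<le> 24 / ln y"
  proof -
    have "0 \<le> y * (y - 3)"
      using assms by simp
    then have "y \<le> (y - 1) * (y - 1)"
      by (simp add: algebra_simps)
    also have "\<dots> \<le> real a * real a"
      using ab assms by (intro mult_mono) auto
    finally have "ln y \<le> 2 * ln (real a)"
      using assms a by (simp add: ln_mult flip: ln_le_cancel_iff)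
    then show ?thesis
      using La assms by (simp add: field_simps)
  qed
  finally show ?thesis .
qed

lemma ln_ge_exp1_of_ge_100:
  fixes u :: real
  assumes "100 \<le> u"
  shows "exp 1 \<le> ln u"
proof -
  have e: "exp 1 \<le> (3::real)"
    using e_less_272 by simp
  have "exp (3::real) = exp 1 ^ 3"
    using exp_of_nat_mult[of 3 1] by simp
  also have "\<dots> \<le> 3 ^ 3"
    using e by (intro power_mono) auto
  also have "\<dots> \<le> u"
    using assms by simp
  finally have "3 \<le> ln u"
    using assms by (metis exp_gt_zero exp_le_cancel_iff exp_ln order_less_le_trans zero_less_numeral)
  then show ?thesis
    using e by simp
qed

lemma Log2_eq_ln_ln:
  fixes u :: real
  assumes "100 \<le> u"
  shows "Log2 u = ln (ln u)"
proof -
  have "exp 1 \<le> ln u"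
    by (rule ln_ge_exp1_of_ge_100[OF assms])
  then have "1 \<le> ln u" "1 \<le> ln (ln u)"
    using exp_ge_add_one_self[of 1] ln_exp[of 1] ln_le_cancel_iff[of "exp 1" "ln u"] by simp_all
  then show ?thesis
    unfolding Log2_def LogM_def by simp
qed

lemma Log2_ge_1: "1 \<le> Log2 u"
  unfolding Log2_def LogM_def by simp

lemma Log2_mono:
  assumes "0 < a" "a \<le> b"
  shows "Log2 a \<le> Log2 b"
proof -
  have "LogM a \<le> LogM b"
    using assms unfolding LogM_def by (intro max.mono) simp_all
  moreover have "0 < LogM a"
    unfolding LogM_def by simp
  ultimately show ?thesis
    unfolding Log2_def LogM_def by (intro max.mono) simp_all
qed

lemma Log2_le_self:
  fixes u :: real
  assumes "100 \<le> u"
  shows "Log2 u \<le> u"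
proof -
  have "1 \<le> ln u"
    using ln_ge_exp1_of_ge_100[OF assms] exp_ge_add_one_self[of 1] by simp
  then have "ln (ln u) \<le> ln u - 1"
    by (intro ln_le_minus_one) simp
  also have "ln u \<le> u - 1"
    using assms by (intro ln_le_minus_one) simp
  finally show ?thesis
    using Log2_eq_ln_ln[OF assms] by simp
qed

lemma recip_sum_primes_in_split:
  assumes "y \<le> m" "m \<le> x"
  shows "recip_sum_primes_in y x = recip_sum_primes_in y m + recip_sum_primes_in m x"
proof -
  have "primes_in y x = primes_in y m \<union> primes_in m x"
    unfolding primes_in_def using assms by auto
  moreover have "primes_in y m \<inter> primes_in m x = {}"
    unfolding primes_in_def by auto
  ultimately show ?thesis
    unfolding recip_sum_primes_in_def by (simp add: sum.union_disjoint)
qed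

lemma recip_sum_primes_in_nonneg: "0 \<le> recip_sum_primes_in y x"
  unfolding recip_sum_primes_in_def by (intro sum_nonneg) simp

lemma recip_sum_primes_in_le:
  assumes "0 \<le> x"
  shows "recip_sum_primes_in y x \<le> x + 1"
proof -
  have sub: "primes_in y x \<subseteq> {..<nat \<lceil>x\<rceil>}"
  proof
    fix p
    assume "p \<in> primes_in y x"
    then have "int p < \<lceil>x\<rceil>"
      unfolding primes_in_def by (simp add: less_ceiling_iff)
    then show "p \<in> {..<nat \<lceil>x\<rceil>}"
      by simp
  qed
  have "recip_sum_primes_in y x \<le> (\<Sum>p\<in>primes_in y x. 1)"
    unfolding recip_sum_primes_in_def
  proof (rule sum_mono)
    fix p
    assume "p \<in> primes_in y x"
    then have "1 \<le> real p"
      using prime_ge_1_nat[OF prime_of_primes_in] by simp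
    then show "1 / real p \<le> 1"
      by simp
  qed
  also have "\<dots> \<le> real (card {..<nat \<lceil>x\<rceil>})"
    using card_mono[OF _ sub] by simp
  also have "\<dots> \<le> x + 1"
    using assms ceiling_correct[of x] by simp
  finally show ?thesis .
qed

lemma mertens_second_Log2:
  fixes x y :: real
  assumes "100 \<le> y" "y \<le> x"
  shows "\<bar>recip_sum_primes_in y x - (Log2 x - Log2 y)\<bar> \<le> 24 / ln y"
  using mertens_second[of y x] Log2_eq_ln_ln[of x] Log2_eq_ln_ln[of y] assms by simp

text \<open>On \<open>[1, z]\<close> the function \<open>Log2\<close> takes values between \<open>1\<close> and \<open>z\<close>, so replacing
  \<open>y\<close> by \<open>max y z\<close> changes \<open>Log2 y\<close> by less than \<open>z\<close>.\<close>
lemma recip_sum_primes_in_cutoff_Log2: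
  fixes x y z :: real
  assumes "100 \<le> z" "z \<le> x" "1 \<le> y" "y \<le> x"
  shows "\<bar>recip_sum_primes_in (max y z) x - (Log2 x - Log2 y)\<bar> \<le> 24 + z"
proof (cases "z \<le> y")
  case True
  have "\<bar>recip_sum_primes_in y x - (Log2 x - Log2 y)\<bar> \<le> 24 / ln y"
    using True assms by (intro mertens_second_Log2) auto
  also have "\<dots> \<le> 24"
    using True assms ln_ge_exp1_of_ge_100[of y] exp_ge_add_one_self[of 1] by (simp add: field_simps)
  finally show ?thesis
    using True assms by simp
next
  case False
  have "\<bar>recip_sum_primes_in z x - (Log2 x - Log2 z)\<bar> \<le> 24 / ln z"
    using assms by (intro mertens_second_Log2) auto
  also have "\<dots> \<le> 24"
    using assms ln_ge_exp1_of_ge_100[of z] exp_ge_add_one_self[of 1] by (simp add: field_simps)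
  finally have "\<bar>recip_sum_primes_in z x - (Log2 x - Log2 z)\<bar> \<le> 24" .
  moreover have "Log2 y \<le> Log2 z" "Log2 z \<le> z" "1 \<le> Log2 y"
    using False assms by (auto intro: Log2_mono Log2_le_self Log2_ge_1)
  ultimately show ?thesis
    using False by (simp add: abs_le_iff)
qed

lemma recip_sum_primes_in_cutoff:
  fixes x y z :: real
  assumes "0 \<le> z" "z \<le> x" "y \<le> x"
  shows "0 \<le> recip_sum_primes_in y x - recip_sum_primes_in (max y z) x"
    and "recip_sum_primes_in y x - recip_sum_primes_in (max y z) x \<le> z + 1"
proof -
  have "recip_sum_primes_in y x - recip_sum_primes_in (max y z) x = recip_sum_primes_in y (max y z)"
    using assms recip_sum_primes_in_split[of y "max y z" x] by simp
  moreover have "recip_sum_primes_in y (max y z) \<le> z + 1"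
  proof (cases "z \<le> y")
    case True
    then have "primes_in y (max y z) = {}"
      unfolding primes_in_def by auto
    then show ?thesis
      using assms by (simp add: recip_sum_primes_in_def)
  qed (use assms recip_sum_primes_in_le in auto)
  ultimately show "0 \<le> recip_sum_primes_in y x - recip_sum_primes_in (max y z) x"
    and "recip_sum_primes_in y x - recip_sum_primes_in (max y z) x \<le> z + 1"
    using recip_sum_primes_in_nonneg by simp_all
qed

section \<open>Elementary symmetric sums\<close>

definition elem_sym :: "('a \<Rightarrow> real) \<Rightarrow> 'a set \<Rightarrow> nat \<Rightarrow> real" where
  "elem_sym a S k = (\<Sum>T | T \<subseteq> S \<and> card T = k. prod a T)"

lemma elem_sym_0:
  assumes "finite S"
  shows "elem_sym a S 0 = 1"
proof -
  have "{T. T \<subseteq> S \<and> card T = 0} = {{}}"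
    using assms by (auto dest: finite_subset)
  then show ?thesis
    unfolding elem_sym_def by simp
qed

lemma elem_sym_empty_Suc: "elem_sym a {} (Suc k) = 0"
proof -
  have "{T. T \<subseteq> {} \<and> card T = Suc k} = {}"
    by auto
  then show ?thesis
    unfolding elem_sym_def by simp
qed

lemma subsets_card_Suc_insert:
  assumes "finite S" "q \<notin> S"
  shows "{T. T \<subseteq> insert q S \<and> card T = Suc k}
    = {T. T \<subseteq> S \<and> card T = Suc k} \<union> insert q ` {T. T \<subseteq> S \<and> card T = k}"
proof (intro set_eqI iffI)
  fix T
  assume T: "T \<in> {T. T \<subseteq> insert q S \<and> card T = Suc k}"
  then have "finite T"
    using assms(1) by (auto intro: finite_subset)
  show "T \<in> {T. T \<subseteq> S \<and> card T = Suc k} \<union> insert q ` {T. T \<subseteq> S \<and> card T = k}"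
  proof (cases "q \<in> T")
    case True
    then have "T = insert q (T - {q})" "T - {q} \<in> {T. T \<subseteq> S \<and> card T = k}"
      using T \<open>finite T\<close> by auto
    then show ?thesis
      by blast
  qed (use T in auto)
next
  fix T
  assume "T \<in> {T. T \<subseteq> S \<and> card T = Suc k} \<union> insert q ` {T. T \<subseteq> S \<and> card T = k}"
  then show "T \<in> {T. T \<subseteq> insert q S \<and> card T = Suc k}"
  proof
    assume "T \<in> insert q ` {T. T \<subseteq> S \<and> card T = k}"
    then obtain U where "U \<subseteq> S" "card U = k" "T = insert q U"
      by auto
    moreover have "finite U" "q \<notin> U"
      using assms \<open>U \<subseteq> S\<close> by (auto intro: finite_subset)
    ultimately show ?thesis
      by auto
  qed auto
qed

lemma elem_sym_insert_Suc:
  assumes "finite S" "q \<notin> S"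
  shows "elem_sym a (insert q S) (Suc k) = elem_sym a S (Suc k) + a q * elem_sym a S k"
proof -
  let ?A = "{T. T \<subseteq> S \<and> card T = Suc k}"
  let ?B = "{T. T \<subseteq> S \<and> card T = k}"
  have fin: "finite ?A" "finite ?B"
    using assms(1) by (auto intro: finite_subset[of _ "Pow S"])
  have inj: "inj_on (insert q) ?B"
    using assms(2) by (intro inj_onI) (metis (no_types, lifting) insert_ident mem_Collect_eq subset_iff)
  have "elem_sym a (insert q S) (Suc k) = (\<Sum>T\<in>?A. prod a T) + (\<Sum>T\<in>insert q ` ?B. prod a T)"
    unfolding elem_sym_def subsets_card_Suc_insert[OF assms]
    using fin assms(2) by (intro sum.union_disjoint) auto
  also have "(\<Sum>T\<in>insert q ` ?B. prod a T) = (\<Sum>U\<in>?B. prod a (insert q U))"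
    by (rule sum.reindex[OF inj, unfolded comp_def])
  also have "\<dots> = (\<Sum>U\<in>?B. a q * prod a U)"
  proof (rule sum.cong[OF refl])
    fix U
    assume "U \<in> ?B"
    then have "finite U" "q \<notin> U"
      using assms by (auto intro: finite_subset)
    then show "prod a (insert q U) = a q * prod a U"
      by simp
  qed
  finally show ?thesis
    unfolding elem_sym_def by (simp add: sum_distrib_left)
qed

lemma elem_sym_nonneg: "(\<And>p. p \<in> S \<Longrightarrow> 0 \<le> a p) \<Longrightarrow> 0 \<le> elem_sym a S k"
  unfolding elem_sym_def by (intro sum_nonneg prod_nonneg) auto

lemma elem_sym_mono:
  assumes "finite S" "S' \<subseteq> S" "\<And>p. p \<in> S \<Longrightarrow> 0 \<le> a p"
  shows "elem_sym a S' k \<le> elem_sym a S k"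
  unfolding elem_sym_def
proof (rule sum_mono2)
  show "finite {T. T \<subseteq> S \<and> card T = k}"
    using assms(1) by (auto intro: finite_subset[of _ "Pow S"])
qed (use assms in \<open>auto intro!: prod_nonneg\<close>)

lemma power_add_ge_linear:
  fixes s a :: real
  assumes "0 \<le> s" "0 \<le> a"
  shows "s ^ Suc m + real (Suc m) * a * s ^ m \<le> (s + a) ^ Suc m"
proof (induction m)
  case (Suc m)
  have "(s + a) * (s ^ Suc m + real (Suc m) * a * s ^ m) \<le> (s + a) * (s + a) ^ Suc m"
    using Suc assms by (intro mult_left_mono) auto
  moreover have "(s + a) * (s ^ Suc m + real (Suc m) * a * s ^ m)
      = s ^ Suc (Suc m) + real (Suc (Suc m)) * a * s ^ Suc m + real (Suc m) * a * a * s ^ m"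
    by (simp add: algebra_simps)
  moreover have "0 \<le> real (Suc m) * a * a * s ^ m"
    using assms by simp
  ultimately show ?case
    by simp
qed simp

definition binom2 :: "nat \<Rightarrow> real" where
  "binom2 k = real k * (real k - 1) / 2"

lemma power_add_le_quadratic:
  fixes s a :: real
  assumes "0 \<le> s" "0 \<le> a"
  shows "(s + a) ^ Suc (Suc n)
    \<le> s ^ Suc (Suc n) + real (Suc (Suc n)) * a * s ^ Suc n + binom2 (Suc (Suc n)) * a\<^sup>2 * (s + a) ^ n"
proof (induction n)
  case 0
  then show ?case
    by (simp add: binom2_def power2_eq_square algebra_simps)
next
  case (Suc n)
  have "s ^ Suc n \<le> (s + a) ^ Suc n"
    using assms by (intro power_mono) auto
  then have mono: "real (Suc (Suc n)) * a\<^sup>2 * s ^ Suc n \<le> real (Suc (Suc n)) * a\<^sup>2 * (s + a) ^ Suc n"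
    by (intro mult_left_mono) auto
  have "(s + a) ^ Suc (Suc (Suc n)) = (s + a) * (s + a) ^ Suc (Suc n)"
    by simp
  also have "\<dots> \<le> (s + a) * (s ^ Suc (Suc n) + real (Suc (Suc n)) * a * s ^ Suc n
      + binom2 (Suc (Suc n)) * a\<^sup>2 * (s + a) ^ n)"
    using Suc assms by (intro mult_left_mono) auto
  also have "\<dots> = s ^ Suc (Suc (Suc n)) + real (Suc (Suc (Suc n))) * a * s ^ Suc (Suc n)
      + real (Suc (Suc n)) * a\<^sup>2 * s ^ Suc n + binom2 (Suc (Suc n)) * a\<^sup>2 * (s + a) ^ Suc n"
    by (simp add: algebra_simps power2_eq_square)
  also have "\<dots> \<le> s ^ Suc (Suc (Suc n)) + real (Suc (Suc (Suc n))) * a * s ^ Suc (Suc n)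
      + real (Suc (Suc n)) * a\<^sup>2 * (s + a) ^ Suc n + binom2 (Suc (Suc n)) * a\<^sup>2 * (s + a) ^ Suc n"
    using mono by simp
  also have "\<dots> = s ^ Suc (Suc (Suc n)) + real (Suc (Suc (Suc n))) * a * s ^ Suc (Suc n)
      + binom2 (Suc (Suc (Suc n))) * a\<^sup>2 * (s + a) ^ Suc n"
    by (simp add: binom2_def field_simps)
  finally show ?case .
qed

theorem fact_mult_elem_sym_le:
  assumes "finite S" "\<And>p. p \<in> S \<Longrightarrow> 0 \<le> a p"
  shows "fact k * elem_sym a S k \<le> (sum a S) ^ k"
  using assms
proof (induction S arbitrary: k rule: finite_induct)
  case empty
  then show ?case
    by (cases k) (auto simp: elem_sym_0 elem_sym_empty_Suc)
next
  case (insert q S)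
  have aq: "0 \<le> a q" and s: "0 \<le> sum a S"
    using insert by (auto intro: sum_nonneg)
  show ?case
  proof (cases k)
    case 0
    then show ?thesis
      using insert by (simp add: elem_sym_0)
  next
    case (Suc j)
    have IH: "fact (Suc j) * elem_sym a S (Suc j) \<le> (sum a S) ^ Suc j" "fact j * elem_sym a S j \<le> (sum a S) ^ j"
      by (rule insert.IH; use insert.prems in auto)+
    have "fact (Suc j) * elem_sym a (insert q S) (Suc j)
        = fact (Suc j) * elem_sym a S (Suc j) + real (Suc j) * a q * (fact j * elem_sym a S j)"
      using insert by (simp add: elem_sym_insert_Suc algebra_simps)
    also have "\<dots> \<le> (sum a S) ^ Suc j + real (Suc j) * a q * (sum a S) ^ j"
      using IH aq by (intro add_mono mult_left_mono) auto
    also have "\<dots> \<le> (sum a S + a q) ^ Suc j"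
      by (rule power_add_ge_linear[OF s aq])
    finally show ?thesis
      using insert Suc by (simp add: add.commute)
  qed
qed

text \<open>With \<open>s = \<Sum> a\<close> and \<open>q = \<Sum> a\<^sup>2\<close>, this is the lower bound for \<open>k! e\<^sub>k\<close>
  obtained by discarding the \<open>k\<close>-tuples with a repeated index; the truncated
  exponent \<open>k - 2\<close> is harmless since \<open>binom2 k = 0\<close> for \<open>k < 2\<close>.\<close>
definition elem_sym_lower :: "real \<Rightarrow> real \<Rightarrow> nat \<Rightarrow> real" where
  "elem_sym_lower s q k = s ^ k - binom2 k * q * s ^ (k - 2)"

lemma elem_sym_lower_Suc:
  fixes s a q :: real
  assumes "0 \<le> s" "0 \<le> a" "0 \<le> q"
  shows "elem_sym_lower (s + a) (q + a\<^sup>2) (Suc j)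
    \<le> elem_sym_lower s q (Suc j) + real (Suc j) * a * elem_sym_lower s q j"
proof (cases "j < 2")
  case True
  then consider "j = 0" | "j = 1"
    by linarith
  then show ?thesis
    by cases (simp_all add: elem_sym_lower_def binom2_def power2_eq_square algebra_simps)
next
  case False
  then obtain m where j: "j = Suc (Suc m)"
    by (metis add_2_eq_Suc le_add_diff_inverse not_less)
  let ?c = "binom2 (Suc (Suc (Suc m)))"
  have T: "(s + a) ^ Suc (Suc (Suc m))
      \<le> s ^ Suc (Suc (Suc m)) + real (Suc (Suc (Suc m))) * a * s ^ Suc (Suc m) + ?c * a\<^sup>2 * (s + a) ^ Suc m"
    by (rule power_add_le_quadratic[OF assms(1,2)])
  have c: "0 \<le> ?c * q"
    using assms by (simp add: binom2_def)
  have m1: "?c * q * (s ^ Suc m + real (Suc m) * a * s ^ m) \<le> ?c * q * (s + a) ^ Suc m"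
    using mult_left_mono[OF power_add_ge_linear[OF assms(1,2)] c] .
  have cc: "real (Suc (Suc (Suc m))) * binom2 (Suc (Suc m)) = ?c * real (Suc m)"
    by (simp add: binom2_def field_simps)
  have e1: "elem_sym_lower (s + a) (q + a\<^sup>2) (Suc j)
      = (s + a) ^ Suc (Suc (Suc m)) - ?c * q * (s + a) ^ Suc m - ?c * a\<^sup>2 * (s + a) ^ Suc m"
    unfolding elem_sym_lower_def j by (simp add: algebra_simps)
  have "elem_sym_lower s q (Suc j) + real (Suc j) * a * elem_sym_lower s q j
      = s ^ Suc (Suc (Suc m)) + real (Suc (Suc (Suc m))) * a * s ^ Suc (Suc m)
        - ?c * q * s ^ Suc m - (real (Suc (Suc (Suc m))) * binom2 (Suc (Suc m))) * a * q * s ^ m"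
    unfolding elem_sym_lower_def j by (simp add: algebra_simps)
  also have "\<dots> = s ^ Suc (Suc (Suc m)) + real (Suc (Suc (Suc m))) * a * s ^ Suc (Suc m)
        - ?c * q * (s ^ Suc m + real (Suc m) * a * s ^ m)"
    unfolding cc by (simp add: algebra_simps)
  finally have e2: "elem_sym_lower s q (Suc j) + real (Suc j) * a * elem_sym_lower s q j
      = s ^ Suc (Suc (Suc m)) + real (Suc (Suc (Suc m))) * a * s ^ Suc (Suc m)
        - ?c * q * (s ^ Suc m + real (Suc m) * a * s ^ m)" .
  show ?thesis
    unfolding e1 e2 using T m1 by linarith
qed

theorem elem_sym_lower_le_fact_mult_elem_sym:
  assumes "finite S" "\<And>p. p \<in> S \<Longrightarrow> 0 \<le> a p"
  shows "elem_sym_lower (sum a S) (\<Sum>p\<in>S. (a p)\<^sup>2) k \<le> fact k * elem_sym a S k"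
  using assms
proof (induction S arbitrary: k rule: finite_induct)
  case empty
  then show ?case
    by (cases k) (auto simp: elem_sym_0 elem_sym_empty_Suc elem_sym_lower_def binom2_def)
next
  case (insert q S)
  let ?s = "sum a S" and ?q = "\<Sum>p\<in>S. (a p)\<^sup>2"
  have aq: "0 \<le> a q" and s: "0 \<le> ?s" and q: "0 \<le> ?q"
    using insert by (auto intro: sum_nonneg)
  show ?case
  proof (cases k)
    case 0
    then show ?thesis
      using insert by (simp add: elem_sym_0 elem_sym_lower_def binom2_def)
  next
    case (Suc j)
    have "elem_sym_lower (sum a (insert q S)) (\<Sum>p\<in>insert q S. (a p)\<^sup>2) (Suc j)
        = elem_sym_lower (?s + a q) (?q + (a q)\<^sup>2) (Suc j)"
      using insert by (simp add: add.commute)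
    also have "\<dots> \<le> elem_sym_lower ?s ?q (Suc j) + real (Suc j) * a q * elem_sym_lower ?s ?q j"
      by (rule elem_sym_lower_Suc[OF s aq q])
    also have "\<dots> \<le> fact (Suc j) * elem_sym a S (Suc j) + real (Suc j) * a q * (fact j * elem_sym a S j)"
      using insert.prems aq by (intro add_mono mult_left_mono insert.IH) auto
    also have "\<dots> = fact (Suc j) * elem_sym a (insert q S) (Suc j)"
      using insert by (simp add: elem_sym_insert_Suc algebra_simps)
    finally show ?thesis
      using Suc by simp
  qed
qed

lemma elem_sym_lower_ge_half:
  fixes s q :: real
  assumes "0 \<le> s" "0 \<le> q" "real k ^ 2 * q \<le> s ^ 2"
  shows "s ^ k / 2 \<le> elem_sym_lower s q k"
proof (cases "k < 2")
  case True
  then have "binom2 k = 0"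
    unfolding binom2_def by (cases k) auto
  then show ?thesis
    unfolding elem_sym_lower_def using assms by simp
next
  case False
  then obtain m where k: "k = m + 2"
    by (metis add.commute le_add_diff_inverse not_less)
  have "binom2 k * q \<le> real k ^ 2 / 2 * q"
    using assms by (intro mult_right_mono) (auto simp: binom2_def power2_eq_square field_simps)
  also have "\<dots> \<le> s ^ 2 / 2"
    using assms by simp
  finally have "binom2 k * q * s ^ m \<le> s ^ 2 / 2 * s ^ m"
    using assms by (intro mult_right_mono) auto
  then show ?thesis
    unfolding elem_sym_lower_def k by (simp add: power_add power2_eq_square mult.assoc)
qed

section \<open>The probability of \<open>omega (n_interval y x f) = k\<close>\<close>

definition np_sample :: "nat set \<Rightarrow> nat \<Rightarrow> nat" where
  "np_sample T = (\<lambda>q. if q \<in> T then q else 1)"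

lemma inj_on_np_sample: "inj_on np_sample {T. 1 \<notin> T}"
proof (rule inj_onI)
  have recover: "V = {q. np_sample V q \<noteq> 1}" if "1 \<notin> V" for V
    using that unfolding np_sample_def by auto
  fix T U
  assume "T \<in> {T. 1 \<notin> T}" "U \<in> {T. 1 \<notin> T}" "np_sample T = np_sample U"
  then show "T = U"
    using recover[of T] recover[of U] by simp
qed

lemma set_pmf_np_pmf:
  assumes "prime p"
  shows "set_pmf (np_pmf p) = {p, 1}"
proof -
  have "set_pmf (bernoulli_pmf (1 / (real p + 1))) = UNIV"
    using prime_gt_0_nat[OF assms] by (intro set_pmf_bernoulli) (auto simp: field_simps)
  then show ?thesis
    unfolding np_pmf_def by (auto simp: UNIV_bool)
qed

lemma pmf_np_pmf:
  assumes "prime p"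
  shows "pmf (np_pmf p) p = 1 / (real p + 1)" and "pmf (np_pmf p) 1 = real p / (real p + 1)"
proof -
  have p: "p \<noteq> 1"
    using assms by auto
  have r: "0 \<le> 1 / (real p + 1)" "1 / (real p + 1) \<le> 1"
    by (auto simp: field_simps)
  let ?g = "\<lambda>b. if b then p else 1"
  have "?g -` {p} = {True}" "?g -` {1} = {False}"
    using p by (auto split: if_splits)
  then show "pmf (np_pmf p) p = 1 / (real p + 1)" "pmf (np_pmf p) 1 = real p / (real p + 1)"
    unfolding np_pmf_def pmf_map using r by (simp_all add: measure_pmf_single field_simps)
qed

lemma set_pmf_np_model: "set_pmf (np_model y x) = np_sample ` Pow (primes_in y x)"
proof -
  let ?S = "primes_in y x"
  have "set_pmf (np_model y x) = PiE_dflt ?S 1 (set_pmf \<circ> np_pmf)"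
    unfolding np_model_def by (simp add: set_Pi_pmf)
  also have "\<dots> = np_sample ` Pow ?S"
  proof (intro equalityI subsetI)
    fix f
    assume "f \<in> PiE_dflt ?S 1 (set_pmf \<circ> np_pmf)"
    then have f: "\<And>q. q \<in> ?S \<Longrightarrow> f q = q \<or> f q = 1" "\<And>q. q \<notin> ?S \<Longrightarrow> f q = 1"
      by (auto simp: PiE_dflt_def set_pmf_np_pmf prime_of_primes_in)
    have "f = np_sample {q \<in> ?S. f q = q}"
      using f unfolding np_sample_def by (intro ext) auto
    then show "f \<in> np_sample ` Pow ?S"
      by blast
  next
    fix f
    assume "f \<in> np_sample ` Pow ?S"
    then show "f \<in> PiE_dflt ?S 1 (set_pmf \<circ> np_pmf)"
      by (auto simp: PiE_dflt_def np_sample_def set_pmf_np_pmf prime_of_primes_in)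
  qed
  finally show ?thesis .
qed

lemma pmf_np_model_sample:
  assumes "T \<subseteq> primes_in y x"
  shows "pmf (np_model y x) (np_sample T)
    = (\<Prod>p\<in>primes_in y x. real p / (real p + 1)) * (\<Prod>p\<in>T. 1 / real p)"
proof -
  let ?S = "primes_in y x"
  have "pmf (np_model y x) (np_sample T) = (\<Prod>q\<in>?S. pmf (np_pmf q) (np_sample T q))"
    unfolding np_model_def using assms by (subst pmf_Pi) (auto simp: np_sample_def)
  also have "\<dots> = (\<Prod>q\<in>?S. real q / (real q + 1) * (if q \<in> T then 1 / real q else 1))"
  proof (rule prod.cong[OF refl])
    fix q
    assume "q \<in> ?S"
    then have q: "prime q"
      by (rule prime_of_primes_in)
    then have "0 < real q"
      by (simp add: prime_gt_0_nat)
    then show "pmf (np_pmf q) (np_sample T q) = real q / (real q + 1) * (if q \<in> T then 1 / real q else 1)"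
      unfolding np_sample_def using pmf_np_pmf[OF q] by (auto simp: field_simps)
  qed
  also have "\<dots> = (\<Prod>q\<in>?S. real q / (real q + 1)) * (\<Prod>q\<in>?S. if q \<in> T then 1 / real q else 1)"
    by (rule prod.distrib)
  also have "(\<Prod>q\<in>?S. if q \<in> T then 1 / real q else 1) = (\<Prod>q\<in>?S \<inter> T. 1 / real q)"
    by (rule prod.inter_restrict[symmetric]) simp
  also have "?S \<inter> T = T"
    using assms by auto
  finally show ?thesis .
qed

lemma omega_n_interval_sample:
  assumes "T \<subseteq> primes_in y x"
  shows "omega (n_interval y x (np_sample T)) = card T"
proof -
  have fin: "finite T"
    using assms by (rule finite_subset) simp
  have pr: "\<And>p. p \<in> T \<Longrightarrow> prime p"
    using assms prime_of_primes_in by auto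
  have "n_interval y x (np_sample T) = (\<Prod>p\<in>primes_in y x \<inter> T. p)"
    unfolding n_interval_def np_sample_def by (simp add: prod.inter_restrict)
  also have "primes_in y x \<inter> T = T"
    using assms by auto
  finally have "n_interval y x (np_sample T) = \<Prod>T" .
  moreover have "prime_factors (\<Prod>T) = T"
  proof -
    have "0 \<notin> T"
      using pr by force
    then have "prime_factors (\<Prod>T) = (\<Union>p\<in>T. prime_factors p)"
      using prime_factors_prod[OF fin, of "\<lambda>p. p"] by simp
    also have "\<dots> = T"
      using pr prime_prime_factors by auto
    finally show ?thesis .
  qed
  ultimately show ?thesis
    unfolding omega_def by simp
qed

theorem prob_omega_eq:
  "measure_pmf.prob (np_model y x) {f. omega (n_interval y x f) = k}
     = (\<Prod>p\<in>primes_in y x. real p / (real p + 1)) * elem_sym (\<lambda>p. 1 / real p) (primes_in y x) k"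
proof -
  let ?S = "primes_in y x"
  let ?M = "np_model y x"
  let ?E = "{f. omega (n_interval y x f) = k}"
  let ?U = "{T. T \<subseteq> ?S \<and> card T = k}"
  have finU: "finite ?U"
    by (rule finite_subset[of _ "Pow ?S"]) auto
  have inj: "inj_on np_sample ?U"
  proof (rule inj_on_subset[OF inj_on_np_sample])
    show "?U \<subseteq> {T. 1 \<notin> T}"
      using prime_of_primes_in[of 1 y x] by auto
  qed
  have "?E \<inter> set_pmf ?M = np_sample ` ?U"
    unfolding set_pmf_np_model using omega_n_interval_sample by auto
  then have "measure_pmf.prob ?M ?E = measure_pmf.prob ?M (np_sample ` ?U)"
    using measure_Int_set_pmf[of ?M ?E] by simp
  also have "\<dots> = (\<Sum>T\<in>?U. pmf ?M (np_sample T))"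
    using finU inj by (simp add: measure_measure_pmf_finite sum.reindex)
  also have "\<dots> = (\<Sum>T\<in>?U. (\<Prod>p\<in>?S. real p / (real p + 1)) * (\<Prod>p\<in>T. 1 / real p))"
    by (intro sum.cong refl) (auto intro: pmf_np_model_sample)
  finally show ?thesis
    unfolding elem_sym_def by (simp add: sum_distrib_left)
qed

section \<open>The product of \<open>p / (p + 1)\<close>\<close>

lemma sum_inverse_square_interval_le:
  fixes z N :: nat
  assumes "2 \<le> z" "z - 1 \<le> N"
  shows "(\<Sum>n=z..N. 1 / (real n)\<^sup>2) \<le> 1 / (real z - 1) - 1 / real N"
  using assms(2)
proof (induction N rule: dec_induct)
  case base
  have "{z..z - 1} = {}"
    using assms by auto
  then show ?case
    using assms by (simp add: of_nat_diff)
next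
  case (step N)
  have N: "1 \<le> real N"
    using step assms by simp
  have "(\<Sum>n=z..Suc N. 1 / (real n)\<^sup>2) = (\<Sum>n=z..N. 1 / (real n)\<^sup>2) + 1 / (real (Suc N))\<^sup>2"
    using step assms by (subst sum.cl_ivl_Suc) auto
  also have "\<dots> \<le> 1 / (real z - 1) - 1 / real N + 1 / (real (Suc N))\<^sup>2"
    using step by simp
  also have "1 / (real (Suc N))\<^sup>2 \<le> 1 / real N - 1 / real (Suc N)"
  proof -
    have "1 / (real (Suc N))\<^sup>2 \<le> 1 / (real N * real (Suc N))"
      using N by (intro divide_left_mono) (auto simp: power2_eq_square intro!: mult_mono)
    also have "\<dots> = 1 / real N - 1 / real (Suc N)"
      using N by (simp add: field_simps)
    finally show ?thesis .
  qed
  finally show ?case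
    by simp
qed

lemma sum_inverse_square_le:
  fixes T :: "nat set" and z :: nat
  assumes "finite T" "\<And>p. p \<in> T \<Longrightarrow> z \<le> p" "2 \<le> z"
  shows "(\<Sum>p\<in>T. (1 / real p)\<^sup>2) \<le> 1 / (real z - 1)"
proof -
  obtain N where "T \<subseteq> {..N}"
    using assms(1) finite_nat_iff_bounded_le by auto
  then have T: "T \<subseteq> {z..max N z}"
    using assms(2) by force
  have "(\<Sum>p\<in>T. (1 / real p)\<^sup>2) \<le> (\<Sum>p=z..max N z. 1 / (real p)\<^sup>2)"
    using sum_mono2[OF _ T, of "\<lambda>p. (1 / real p)\<^sup>2"] by (simp add: power_divide)
  also have "\<dots> \<le> 1 / (real z - 1) - 1 / real (max N z)"
    using assms by (intro sum_inverse_square_interval_le) auto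
  also have "\<dots> \<le> 1 / (real z - 1)"
    by simp
  finally show ?thesis .
qed

lemma prod_div_add_one_bounds:
  fixes S :: "nat set"
  assumes "finite S" "\<And>p. p \<in> S \<Longrightarrow> 1 \<le> p"
  shows "exp (- (\<Sum>p\<in>S. 1 / real p)) \<le> (\<Prod>p\<in>S. real p / (real p + 1))"
    and "(\<Prod>p\<in>S. real p / (real p + 1)) \<le> exp (- (\<Sum>p\<in>S. 1 / real p) + (\<Sum>p\<in>S. (1 / real p)\<^sup>2) / 2)"
proof -
  have "(\<Prod>p\<in>S. real p / (real p + 1)) = (\<Prod>p\<in>S. exp (- ln (1 + 1 / real p)))"
  proof (rule prod.cong[OF refl])
    fix p
    assume "p \<in> S"
    then have p: "1 \<le> real p"
      using assms by simp
    then have "exp (- ln (1 + 1 / real p)) = 1 / (1 + 1 / real p)"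
      by (simp add: exp_minus inverse_eq_divide add_pos_nonneg)
    also have "\<dots> = real p / (real p + 1)"
      using p by (simp add: field_simps)
    finally show "real p / (real p + 1) = exp (- ln (1 + 1 / real p))"
      by simp
  qed
  also have "\<dots> = exp (\<Sum>p\<in>S. - ln (1 + 1 / real p))"
    by (rule exp_sum[symmetric]) (use assms in simp)
  finally have e: "(\<Prod>p\<in>S. real p / (real p + 1)) = exp (- (\<Sum>p\<in>S. ln (1 + 1 / real p)))"
    by (simp add: sum_negf)
  have "(\<Sum>p\<in>S. ln (1 + 1 / real p)) \<le> (\<Sum>p\<in>S. 1 / real p)"
    by (intro sum_mono ln_add_one_self_le_self) simp
  then show "exp (- (\<Sum>p\<in>S. 1 / real p)) \<le> (\<Prod>p\<in>S. real p / (real p + 1))"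
    unfolding e by simp
  have "(\<Sum>p\<in>S. 1 / real p - (1 / real p)\<^sup>2 / 2) \<le> (\<Sum>p\<in>S. ln (1 + 1 / real p))"
    by (intro sum_mono ln_one_plus_ge_quadratic) simp
  then show "(\<Prod>p\<in>S. real p / (real p + 1)) \<le> exp (- (\<Sum>p\<in>S. 1 / real p) + (\<Sum>p\<in>S. (1 / real p)\<^sup>2) / 2)"
    unfolding e by (simp add: sum_subtractf sum_divide_distrib)
qed

section \<open>Poisson weights and the function \<open>Q\<close>\<close>

lemma ln_poisson_minus_Q:
  fixes k :: nat and lam s :: real
  assumes "1 \<le> k" "0 < lam" "0 < s"
  shows "(- s + real k * ln s - ln (fact k)) - (- lam * Q (real k / lam) - ln (real k) / 2)
    = real k * ln (s / lam) - (s - lam) - stirling_remainder k"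
  using assms unfolding Q_def stirling_remainder_def by (simp add: ln_div algebra_simps)

lemma poisson_eq_exp:
  fixes s :: real
  assumes "0 < s"
  shows "exp (- s) * s ^ k / fact k = exp (- s + real k * ln s - ln (fact k))"
proof -
  have "s ^ k = exp (real k * ln s)"
    using assms by (simp add: exp_of_nat_mult)
  then show ?thesis
    unfolding exp_diff exp_add by simp
qed

lemma exp_div_sqrt_eq_exp:
  assumes "1 \<le> k"
  shows "exp a / sqrt (real k) = exp (a - ln (real k) / 2)"
proof -
  have "sqrt (real k) = exp (ln (real k) / 2)"
    using assms by (simp add: powr_half_sqrt[symmetric] powr_def)
  then show ?thesis
    by (simp add: exp_diff)
qed

text \<open>Here \<open>k ln (s/\<lambda>)\<close> is bounded above by \<open>k (s - \<lambda>)/\<lambda>\<close>, so the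
  exponent compares with \<open>(k/\<lambda> - 1)(s - \<lambda>)\<close>, and \<open>k/\<lambda> \<le> T\<close>.\<close>
lemma poisson_le_Q:
  fixes k :: nat and lam s C T :: real
  assumes "1 \<le> k" "0 < lam" "0 \<le> s" "\<bar>s - lam\<bar> \<le> C" "real k \<le> T * lam" "1 \<le> T"
  shows "exp (- s) * s ^ k / fact k \<le> exp (T * C - 1 / 2) * (exp (- lam * Q (real k / lam)) / sqrt (real k))"
proof (cases "s = 0")
  case True
  then show ?thesis
    using assms(1) by (simp add: zero_power)
next
  case False
  with assms have s: "0 < s"
    by simp
  have "real k * ln (s / lam) - (s - lam) \<le> real k * (s / lam - 1) - (s - lam)"
    using s assms by (intro diff_right_mono mult_left_mono ln_le_minus_one) auto
  also have "\<dots> = (real k / lam - 1) * (s - lam)"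
    using assms by (simp add: field_simps)
  also have "\<dots> \<le> \<bar>real k / lam - 1\<bar> * \<bar>s - lam\<bar>"
    by (metis abs_ge_self abs_mult)
  also have "\<dots> \<le> T * C"
  proof (intro mult_mono)
    have "0 \<le> real k / lam" "real k / lam \<le> T"
      using assms by (simp_all add: field_simps)
    then show "\<bar>real k / lam - 1\<bar> \<le> T"
      unfolding abs_le_iff using assms(6) by linarith
  qed (use assms in auto)
  finally have "real k * ln (s / lam) - (s - lam) - stirling_remainder k \<le> T * C - 1 / 2"
    using stirling_remainder_bounds(1)[OF assms(1)] by linarith
  then have "- s + real k * ln s - ln (fact k) \<le> T * C - 1 / 2 + (- lam * Q (real k / lam) - ln (real k) / 2)"
    using ln_poisson_minus_Q[OF assms(1,2) s] by linarith
  then have "exp (- s + real k * ln s - ln (fact k))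
      \<le> exp (T * C - 1 / 2 + (- lam * Q (real k / lam) - ln (real k) / 2))"
    by simp
  then show ?thesis
    by (simp only: poisson_eq_exp[OF s] exp_div_sqrt_eq_exp[OF assms(1)] exp_add)
qed

text \<open>Symmetrically, \<open>k ln (s/\<lambda>) \<ge> k (s - \<lambda>)/s\<close>, and \<open>k/s \<le> T\<close>.\<close>
lemma poisson_ge_Q:
  fixes k :: nat and lam s C T :: real
  assumes "1 \<le> k" "0 < lam" "0 < s" "\<bar>s - lam\<bar> \<le> C" "real k \<le> T * s" "1 \<le> T"
  shows "exp (- (T * C + 1)) * (exp (- lam * Q (real k / lam)) / sqrt (real k)) \<le> exp (- s) * s ^ k / fact k"
proof -
  have "\<bar>real k / s - 1\<bar> * \<bar>s - lam\<bar> \<le> T * C"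
  proof (intro mult_mono)
    have "0 \<le> real k / s" "real k / s \<le> T"
      using assms by (simp_all add: field_simps)
    then show "\<bar>real k / s - 1\<bar> \<le> T"
      unfolding abs_le_iff using assms(6) by linarith
  qed (use assms in auto)
  then have "- (T * C) \<le> - (\<bar>real k / s - 1\<bar> * \<bar>s - lam\<bar>)"
    by simp
  also have "\<dots> \<le> (real k / s - 1) * (s - lam)"
    using abs_ge_minus_self[of "(real k / s - 1) * (s - lam)"] by (simp add: abs_mult)
  also have "\<dots> = real k * (1 - lam / s) - (s - lam)"
    using assms by (simp add: field_simps)
  also have "\<dots> \<le> real k * ln (s / lam) - (s - lam)"
    using assms ln_le_minus_one[of "lam / s"] by (intro diff_right_mono mult_left_mono) (auto simp: ln_div)
  finally have "- (T * C + 1) \<le> real k * ln (s / lam) - (s - lam) - stirling_remainder k"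
    using stirling_remainder_bounds(2)[OF assms(1)] by linarith
  then have "- (T * C + 1) + (- lam * Q (real k / lam) - ln (real k) / 2) \<le> - s + real k * ln s - ln (fact k)"
    using ln_poisson_minus_Q[OF assms(1,2,3)] by linarith
  then have "exp (- (T * C + 1) + (- lam * Q (real k / lam) - ln (real k) / 2))
      \<le> exp (- s + real k * ln s - ln (fact k))"
    by simp
  then show ?thesis
    by (simp only: poisson_eq_exp[OF assms(3)] exp_div_sqrt_eq_exp[OF assms(1)] exp_add)
qed

lemma recip_sum_primes_in_Log2:
  fixes x y :: real
  assumes "100 \<le> x" "1 \<le> y" "y \<le> x"
  shows "\<bar>recip_sum_primes_in y x - (Log2 x - Log2 y)\<bar> \<le> 225"
  using recip_sum_primes_in_cutoff_Log2[of 100 x y] recip_sum_primes_in_cutoff[of 100 x y] assms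
  by (simp add: abs_le_iff)

lemma prod_primes_in_bounds:
  fixes x y :: real
  defines "s \<equiv> recip_sum_primes_in y x"
  shows "exp (- s) \<le> (\<Prod>p\<in>primes_in y x. real p / (real p + 1))"
    and "(\<Prod>p\<in>primes_in y x. real p / (real p + 1)) \<le> exp (- s + 1 / 2)"
proof -
  have ge1: "\<And>p. p \<in> primes_in y x \<Longrightarrow> 1 \<le> p"
    using prime_ge_1_nat prime_of_primes_in by blast
  show "exp (- s) \<le> (\<Prod>p\<in>primes_in y x. real p / (real p + 1))"
    using prod_div_add_one_bounds(1)[OF _ ge1] unfolding s_def recip_sum_primes_in_def by simp
  have "(\<Prod>p\<in>primes_in y x. real p / (real p + 1))
      \<le> exp (- s + (\<Sum>p\<in>primes_in y x. (1 / real p)\<^sup>2) / 2)"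
    using prod_div_add_one_bounds(2)[OF finite_primes_in ge1] unfolding s_def recip_sum_primes_in_def .
  also have "(\<Sum>p\<in>primes_in y x. (1 / real p)\<^sup>2) \<le> 1 / (real (2::nat) - 1)"
    using prime_ge_2_nat prime_of_primes_in by (intro sum_inverse_square_le) auto
  then have "exp (- s + (\<Sum>p\<in>primes_in y x. (1 / real p)\<^sup>2) / 2) \<le> exp (- s + 1 / 2)"
    by simp
  finally show "(\<Prod>p\<in>primes_in y x. real p / (real p + 1)) \<le> exp (- s + 1 / 2)" .
qed

lemma Log2_ge_of_exp_exp_le:
  fixes a x :: real
  assumes "exp (exp a) \<le> x" "1 \<le> a"
  shows "a \<le> Log2 x"
proof -
  have "1 \<le> exp a"
    using assms by simp
  moreover have "exp a \<le> ln x"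
    using assms by (metis exp_gt_zero exp_le_cancel_iff exp_ln order_less_le_trans)
  ultimately have "1 \<le> ln x" "a \<le> ln (ln x)"
    using ln_mono[of "exp a" "ln x"] by (linarith, simp)
  then show ?thesis
    unfolding Log2_def LogM_def by simp
qed

lemma scale_bounds_of_eq_mult:
  fixes t lam :: real
  assumes "1 \<le> k" "0 \<le> lam" "t \<le> 10" "real k = t * lam"
  shows "0 < lam" "real k \<le> 10 * lam" "t = real k / lam"
proof -
  show "0 < lam"
    using assms by (cases "lam = 0") auto
  then show "real k \<le> 10 * lam" "t = real k / lam"
    using assms by (simp_all add: mult_right_mono field_simps)
qed

lemma Log2_gap_nonneg: "1 \<le> y \<Longrightarrow> y \<le> x \<Longrightarrow> 0 \<le> Log2 x - Log2 y"
  using Log2_mono[of y x] by simp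

lemma prob_omega_le:
  fixes x y t :: real and k :: nat
  assumes "100 \<le> x" "1 \<le> y" "y \<le> x" "1 \<le> k" "t \<le> 10" "real k = t * (Log2 x - Log2 y)"
  shows "measure_pmf.prob (np_model y x) {f. omega (n_interval y x f) = k}
    \<le> exp 2250 * (exp (- (Log2 x - Log2 y) * Q t) / sqrt (real k))"
proof -
  define lam where "lam = Log2 x - Log2 y"
  define s where "s = recip_sum_primes_in y x"
  note lam = scale_bounds_of_eq_mult[OF assms(4) Log2_gap_nonneg[OF assms(2,3)] assms(5,6), folded lam_def]
  have "measure_pmf.prob (np_model y x) {f. omega (n_interval y x f) = k}
      = (\<Prod>p\<in>primes_in y x. real p / (real p + 1)) * elem_sym (\<lambda>p. 1 / real p) (primes_in y x) k"
    by (rule prob_omega_eq)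
  also have "\<dots> \<le> exp (- s + 1 / 2) * (s ^ k / fact k)"
    using prod_primes_in_bounds(2) fact_mult_elem_sym_le[of "primes_in y x" "\<lambda>p. 1 / real p" k]
    unfolding s_def recip_sum_primes_in_def
    by (intro mult_mono elem_sym_nonneg) (simp_all add: field_simps)
  also have "\<dots> = exp (1 / 2) * (exp (- s) * s ^ k / fact k)"
    by (metis add.commute exp_add mult.assoc times_divide_eq_right)
  also have "\<dots> \<le> exp (1 / 2) * (exp (10 * 225 - 1 / 2) * (exp (- lam * Q (real k / lam)) / sqrt (real k)))"
    using recip_sum_primes_in_Log2[OF assms(1-3)] recip_sum_primes_in_nonneg lam assms(4)
    unfolding s_def lam_def by (intro mult_left_mono poisson_le_Q) auto
  also have "\<dots> = exp 2250 * (exp (- lam * Q t) / sqrt (real k))"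
    using lam by (simp add: mult.assoc flip: exp_add)
  finally show ?thesis
    unfolding lam_def .
qed

lemma recip_sum_primes_in_Log2_large:
  fixes x y :: real
  assumes "exp 480 \<le> y" "y \<le> x"
  shows "\<bar>recip_sum_primes_in y x - (Log2 x - Log2 y)\<bar> \<le> 1 / 20"
proof -
  have big: "481 \<le> exp (480::real)"
    using exp_ge_add_one_self[of 480] by simp
  then have "480 \<le> ln y"
    using assms(1) by (metis exp_gt_zero exp_le_cancel_iff exp_ln order_less_le_trans)
  have "\<bar>recip_sum_primes_in y x - (Log2 x - Log2 y)\<bar> \<le> 24 / ln y"
    using assms big by (intro mertens_second_Log2) auto
  also have "\<dots> \<le> 24 / 480"
    using \<open>480 \<le> ln y\<close> by (intro divide_left_mono) auto
  finally show ?thesis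
    by simp
qed

text \<open>For the lower bound only the primes beyond \<open>401\<close> are used, where
  \<open>\<Sum> 1/p\<^sup>2 \<le> 1/400\<close>. Their reciprocal sum \<open>s'\<close> is close to \<open>\<lambda>\<close>: either \<open>y\<close> is
  so large that Mertens' error term is tiny, or \<open>\<lambda>\<close> itself is large.\<close>
lemma recip_sum_primes_in_tail:
  fixes x y :: real and k :: nat
  assumes "exp (exp 2000) \<le> x" "1 \<le> y" "y \<le> x" "1 \<le> k" "real k \<le> 10 * (Log2 x - Log2 y)"
  defines "s' \<equiv> recip_sum_primes_in (max y 401) x"
  shows "0 < s'" "\<bar>s' - (Log2 x - Log2 y)\<bar> \<le> 425" "real k \<le> 20 * s'"
proof -
  define lam where "lam = Log2 x - Log2 y"
  have big: "481 \<le> exp (480::real)"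
    using exp_ge_add_one_self[of 480] by simp
  have x: "401 \<le> x"
    using exp_ge_add_one_self[of "exp 2000"] exp_ge_add_one_self[of 2000] assms(1) by linarith
  have Lx: "2000 \<le> Log2 x"
    by (rule Log2_ge_of_exp_exp_le[OF assms(1)]) simp
  have lam10: "1 / 10 \<le> lam"
    using assms(4,5) unfolding lam_def by simp
  have "\<bar>s' - lam\<bar> \<le> 1 / 20 \<or> (\<bar>s' - lam\<bar> \<le> 425 \<and> 1521 \<le> lam)"
  proof (cases "exp 480 \<le> y")
    case True
    then have "max y 401 = y"
      using big by simp
    then show ?thesis
      using recip_sum_primes_in_Log2_large[OF True assms(3)] unfolding s'_def lam_def by simp
  next
    case False
    have "Log2 y \<le> Log2 (exp 480)"
      using False assms by (intro Log2_mono) auto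
    also have "\<dots> = ln 480"
      using big by (simp add: Log2_eq_ln_ln)
    also have "\<dots> \<le> 479"
      using ln_le_minus_one[of 480] by simp
    finally have "Log2 y \<le> 479" .
    with Lx show ?thesis
      using recip_sum_primes_in_cutoff_Log2[of 401 x y] x assms unfolding s'_def lam_def by simp
  qed
  then have "s' - lam \<le> 425" "lam - s' \<le> 425" "lam / 2 \<le> s'"
    using lam10 unfolding abs_le_iff by (elim disjE conjE; linarith)+
  then show "0 < s'" "\<bar>s' - (Log2 x - Log2 y)\<bar> \<le> 425" "real k \<le> 20 * s'"
    using lam10 assms(5) unfolding lam_def[symmetric] abs_le_iff by linarith+
qed

lemma elem_sym_recip_primes_in_ge:
  fixes x y :: real
  defines "s' \<equiv> recip_sum_primes_in (max y 401) x"
  assumes "real k \<le> 20 * s'"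
  shows "s' ^ k / (2 * fact k) \<le> elem_sym (\<lambda>p. 1 / real p) (primes_in y x) k"
proof -
  define S' where "S' = primes_in (max y 401) x"
  define q' where "q' = (\<Sum>p\<in>S'. (1 / real p)\<^sup>2)"
  have S'S: "S' \<subseteq> primes_in y x"
    unfolding S'_def primes_in_def by auto
  have finS': "finite S'"
    using finite_subset[OF S'S] by simp
  have "q' \<le> 1 / (real (401::nat) - 1)"
    unfolding q'_def by (rule sum_inverse_square_le[OF finS']) (auto simp: S'_def primes_in_def)
  moreover have "real k ^ 2 \<le> (20 * s') ^ 2"
    using assms(2) by (intro power_mono) auto
  ultimately have "real k ^ 2 * q' \<le> (20 * s') ^ 2 * (1 / 400)"
    unfolding q'_def by (intro mult_mono) (auto intro: sum_nonneg)
  then have "s' ^ k / 2 \<le> fact k * elem_sym (\<lambda>p. 1 / real p) S' k"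
    using elem_sym_lower_ge_half[of s' q' k] elem_sym_lower_le_fact_mult_elem_sym[OF finS', of "\<lambda>p. 1 / real p" k]
      recip_sum_primes_in_nonneg[of "max y 401" x]
    unfolding q'_def s'_def S'_def recip_sum_primes_in_def by (simp add: sum_nonneg power_mult_distrib)
  also have "\<dots> \<le> fact k * elem_sym (\<lambda>p. 1 / real p) (primes_in y x) k"
    using elem_sym_mono[OF _ S'S, of "\<lambda>p. 1 / real p" k] by simp
  finally show ?thesis
    by (simp add: field_simps)
qed

lemma prob_omega_ge:
  fixes x y t :: real and k :: nat
  assumes "exp (exp 2000) \<le> x" "1 \<le> y" "y \<le> x" "1 \<le> k" "t \<le> 10" "real k = t * (Log2 x - Log2 y)"
  shows "exp (- 8903) / 2 * (exp (- (Log2 x - Log2 y) * Q t) / sqrt (real k))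
    \<le> measure_pmf.prob (np_model y x) {f. omega (n_interval y x f) = k}"
proof -
  define lam where "lam = Log2 x - Log2 y"
  define s' where "s' = recip_sum_primes_in (max y 401) x"
  note lam = scale_bounds_of_eq_mult[OF assms(4) Log2_gap_nonneg[OF assms(2,3)] assms(5,6), folded lam_def]
  note tail = recip_sum_primes_in_tail[OF assms(1-4) lam(2)[unfolded lam_def], folded s'_def lam_def]
  have "401 \<le> x"
    using exp_ge_add_one_self[of "exp 2000"] exp_ge_add_one_self[of 2000] assms(1) by linarith
  then have "exp (- 402) * exp (- s') \<le> exp (- (recip_sum_primes_in y x))"
    using recip_sum_primes_in_cutoff(2)[of 401 x y] assms(3) unfolding s'_def by (simp flip: exp_add)
  then have prod_ge: "exp (- 402) * exp (- s') \<le> (\<Prod>p\<in>primes_in y x. real p / (real p + 1))"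
    using prod_primes_in_bounds(1) by (rule order_trans)
  have "exp (- 8903) / 2 * (exp (- lam * Q t) / sqrt (real k))
      = exp (- 402) / 2 * (exp (- (20 * 425 + 1)) * (exp (- lam * Q (real k / lam)) / sqrt (real k)))"
    using lam by (simp flip: exp_add)
  also have "\<dots> \<le> exp (- 402) / 2 * (exp (- s') * s' ^ k / fact k)"
    using tail lam assms(4) unfolding lam_def by (intro mult_left_mono poisson_ge_Q) auto
  also have "\<dots> = (exp (- 402) * exp (- s')) * (s' ^ k / (2 * fact k))"
    by simp
  also have "\<dots> \<le> (\<Prod>p\<in>primes_in y x. real p / (real p + 1)) * elem_sym (\<lambda>p. 1 / real p) (primes_in y x) k"
    using prod_ge elem_sym_recip_primes_in_ge[of k y x] tail
    unfolding s'_def by (intro mult_mono prod_nonneg) auto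
  also have "\<dots> = measure_pmf.prob (np_model y x) {f. omega (n_interval y x f) = k}"
    by (rule prob_omega_eq[symmetric])
  finally show ?thesis
    unfolding lam_def .
qed

theorem proposition2p3:
  "\<exists>c C X0. c > 0 \<and> C > 0 \<and>
    (\<forall>x y t. \<forall>k::nat. X0 \<le> x \<longrightarrow> 1 \<le> y \<longrightarrow> y \<le> x \<longrightarrow> 1 \<le> k \<longrightarrow> t \<le> 10 \<longrightarrow>
       real k = t * (Log2 x - Log2 y) \<longrightarrow>
       (let P = measure_pmf.prob (np_model y x) {f. omega (n_interval y x f) = k};
            B = exp (- (Log2 x - Log2 y) * Q t) / sqrt (real k)
        in c * B \<le> P \<and> P \<le> C * B))"
proof (intro exI conjI allI impI)
  fix x y t :: real and k :: nat
  assume x: "exp (exp 2000) \<le> x" and "1 \<le> y" "y \<le> x" "1 \<le> k" "t \<le> 10"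
    "real k = t * (Log2 x - Log2 y)"
  moreover have "100 \<le> x"
    using exp_ge_add_one_self[of "exp 2000"] exp_ge_add_one_self[of 2000] x by linarith
  ultimately show "let P = measure_pmf.prob (np_model y x) {f. omega (n_interval y x f) = k};
            B = exp (- (Log2 x - Log2 y) * Q t) / sqrt (real k)
        in exp (- 8903) / 2 * B \<le> P \<and> P \<le> exp 2250 * B"
    unfolding Let_def using prob_omega_ge prob_omega_le by blast
qed simp_all

end
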